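(* Let $H(m)$ denote the Heisenberg Lie algebra of dimension $2m+1$. Then (i) $\mathcal{M}^{(2)}(H(1))\cong A(5)$; (ii) $\mathcal{M}^{(2)}(H(m))\cong A\!\left(\frac{8m^3-2m}{3}\right)$ for all $m\geq 2$.
   Context: All Lie algebras are over a fixed field. For a Lie algebra $L$ with free presentation $L\cong F/R$ ($F$ a free Lie algebra, $R$ an ideal of $F$), the $2$-nilpotent multiplier is $\mathcal{M}^{(2)}(L)=(R\cap F^{3})/[[R,F],F]$, where $F^3=[[F,F],F]$ is the third term of the lower central series; it is independent of the chosen presentation up to isomorphism. $A(k)$ denotes the abelian Lie algebra of dimension $k$. The Heisenberg Lie algebra $H(m)$ is the Lie algebra of dimension $2m+1$ with $H(m)^2=Z(H(m))$ and $\dim H(m)^2=1$. *)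

theory Defs
  imports Complex_Main "HOL-Library.Function_Algebras"
begin

definition lie_algebra ::
  "('k::field \<Rightarrow> 'l::ab_group_add \<Rightarrow> 'l) \<Rightarrow> ('l \<Rightarrow> 'l \<Rightarrow> 'l) \<Rightarrow> bool" where
  "lie_algebra scale br \<longleftrightarrow>
     vector_space scale \<and>
     (\<forall>x y z. br (x + y) z = br x z + br y z) \<and>
     (\<forall>x y z. br x (y + z) = br x y + br x z) \<and>
     (\<forall>a x y. br (scale a x) y = scale a (br x y)) \<and>
     (\<forall>a x y. br x (scale a y) = scale a (br x y)) \<and>
     (\<forall>x. br x x = 0) \<and>
     (\<forall>x y z. br x (br y z) + br y (br z x) + br z (br x y) = 0)"

definition lie_prod ::
  "('k::field \<Rightarrow> 'l::ab_group_add \<Rightarrow> 'l) \<Rightarrow> ('l \<Rightarrow> 'l \<Rightarrow> 'l) \<Rightarrow> 'l set \<Rightarrow> 'l set \<Rightarrow> 'l set" where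
  "lie_prod scale br A B = module.span scale {br a b | a b. a \<in> A \<and> b \<in> B}"

definition lie_center :: "('l::zero \<Rightarrow> 'l \<Rightarrow> 'l) \<Rightarrow> 'l set" where
  "lie_center br = {z. \<forall>x. br z x = 0}"

definition heisenberg ::
  "('k::field \<Rightarrow> 'l::ab_group_add \<Rightarrow> 'l) \<Rightarrow> ('l \<Rightarrow> 'l \<Rightarrow> 'l) \<Rightarrow> nat \<Rightarrow> bool" where
  "heisenberg scale br m \<longleftrightarrow>
     lie_algebra scale br \<and>
     vector_space.dim scale (UNIV :: 'l set) = 2 * m + 1 \<and>
     lie_prod scale br UNIV UNIV = lie_center br \<and>
     vector_space.dim scale (lie_prod scale br UNIV UNIV) = 1"

text \<open>Elements of the free associative algebra k<X> are functions from words to k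
  (the elements of the free Lie algebra below are automatically finitely supported).\<close>

definition fa_scale :: "'k::field \<Rightarrow> ('x list \<Rightarrow> 'k) \<Rightarrow> ('x list \<Rightarrow> 'k)" where
  "fa_scale c f = (\<lambda>w. c * f w)"

definition fa_mul :: "('x list \<Rightarrow> 'k::field) \<Rightarrow> ('x list \<Rightarrow> 'k) \<Rightarrow> ('x list \<Rightarrow> 'k)" where
  "fa_mul f g = (\<lambda>w. \<Sum>i\<le>length w. f (take i w) * g (drop i w))"

definition fa_comm :: "('x list \<Rightarrow> 'k::field) \<Rightarrow> ('x list \<Rightarrow> 'k) \<Rightarrow> ('x list \<Rightarrow> 'k)" where
  "fa_comm f g = fa_mul f g - fa_mul g f"

definition fa_gen :: "'x \<Rightarrow> ('x list \<Rightarrow> 'k::field)" where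
  "fa_gen x = (\<lambda>w. if w = [x] then 1 else 0)"

text \<open>The free Lie algebra on X: the Lie subalgebra of k<X> generated by X
  (Lie polynomials); by Witt's theorem this is free on X.\<close>
inductive_set free_lie :: "'x set \<Rightarrow> ('x list \<Rightarrow> 'k::field) set" for X where
  gen: "x \<in> X \<Longrightarrow> fa_gen x \<in> free_lie X"
| zero: "0 \<in> free_lie X"
| add: "f \<in> free_lie X \<Longrightarrow> g \<in> free_lie X \<Longrightarrow> f + g \<in> free_lie X"
| smult: "f \<in> free_lie X \<Longrightarrow> fa_scale c f \<in> free_lie X"
| bracket: "f \<in> free_lie X \<Longrightarrow> g \<in> free_lie X \<Longrightarrow> fa_comm f g \<in> free_lie X"

definition free_presentation ::
  "'x set \<Rightarrow> ('k::field \<Rightarrow> 'l::ab_group_add \<Rightarrow> 'l) \<Rightarrow> ('l \<Rightarrow> 'l \<Rightarrow> 'l)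
     \<Rightarrow> (('x list \<Rightarrow> 'k) \<Rightarrow> 'l) \<Rightarrow> bool" where
  "free_presentation X scale br \<phi> \<longleftrightarrow>
     (\<forall>f\<in>free_lie X. \<forall>g\<in>free_lie X. \<phi> (f + g) = \<phi> f + \<phi> g) \<and>
     (\<forall>c. \<forall>f\<in>free_lie X. \<phi> (fa_scale c f) = scale c (\<phi> f)) \<and>
     (\<forall>f\<in>free_lie X. \<forall>g\<in>free_lie X. \<phi> (fa_comm f g) = br (\<phi> f) (\<phi> g)) \<and>
     \<phi> ` free_lie X = UNIV"

definition pres_kernel :: "'x set \<Rightarrow> (('x list \<Rightarrow> 'k::field) \<Rightarrow> 'l::zero) \<Rightarrow> ('x list \<Rightarrow> 'k) set" where
  "pres_kernel X \<phi> = {f \<in> free_lie X. \<phi> f = 0}"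

section \<open>The 2-nilpotent multiplier (R \<inter> F^3) / [[R,F],F]\<close>

definition mult2_num :: "'x set \<Rightarrow> (('x list \<Rightarrow> 'k::field) \<Rightarrow> 'l::zero) \<Rightarrow> ('x list \<Rightarrow> 'k) set" where
  "mult2_num X \<phi> = pres_kernel X \<phi> \<inter>
     lie_prod fa_scale fa_comm (lie_prod fa_scale fa_comm (free_lie X) (free_lie X)) (free_lie X)"

definition mult2_den :: "'x set \<Rightarrow> (('x list \<Rightarrow> 'k::field) \<Rightarrow> 'l::zero) \<Rightarrow> ('x list \<Rightarrow> 'k) set" where
  "mult2_den X \<phi> =
     lie_prod fa_scale fa_comm (lie_prod fa_scale fa_comm (pres_kernel X \<phi>) (free_lie X)) (free_lie X)"

text \<open>quot_dim scale M N k: the quotient vector space M/N (N \<subseteq> M subspaces) has dimension k,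
  i.e. there are k elements of M whose classes form a basis of M/N.\<close>
definition quot_dim :: "('k::field \<Rightarrow> 'v::ab_group_add \<Rightarrow> 'v) \<Rightarrow> 'v set \<Rightarrow> 'v set \<Rightarrow> nat \<Rightarrow> bool" where
  "quot_dim scale M N k \<longleftrightarrow>
     (\<exists>B. finite B \<and> card B = k \<and> B \<subseteq> M \<and>
        M \<subseteq> module.span scale (B \<union> N) \<and>
        (\<forall>c. (\<Sum>b\<in>B. scale (c b) b) \<in> N \<longrightarrow> (\<forall>b\<in>B. c b = 0)))"

definition quot_iso_abelian ::
  "('k::field \<Rightarrow> 'v::ab_group_add \<Rightarrow> 'v) \<Rightarrow> ('v \<Rightarrow> 'v \<Rightarrow> 'v) \<Rightarrow> 'v set \<Rightarrow> 'v set \<Rightarrow> nat \<Rightarrow> bool" where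
  "quot_iso_abelian scale br M N k \<longleftrightarrow>
     (\<forall>a\<in>M. \<forall>b\<in>M. br a b \<in> N) \<and> quot_dim scale M N k"

abbreviation mult2_iso_abelian ::
  "'x set \<Rightarrow> (('x list \<Rightarrow> 'k::field) \<Rightarrow> 'l::zero) \<Rightarrow> nat \<Rightarrow> bool" where
  "mult2_iso_abelian X \<phi> k \<equiv>
     quot_iso_abelian fa_scale fa_comm (mult2_num X \<phi>) (mult2_den X \<phi>) k"

end

theory Submission
  imports Defs
begin

text \<open>Write \<open>L = F/R\<close>.  As \<open>L\<close> is nilpotent of class 2, \<open>F\<^sup>3 \<subseteq> R\<close>, so the multiplier is
  \<open>F\<^sup>3/N\<close> with \<open>N = [[R,F],F]\<close>, and it is abelian.  Lifting a basis \<open>u\<^sub>a\<close> of \<open>L\<close> modulo the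
  centre to \<open>e\<^sub>a\<close> and the central \<open>z\<close> to \<open>t\<close>, triple brackets of these elements span \<open>F\<^sup>3\<close>
  modulo \<open>N\<close>.  For \<open>m \<ge> 2\<close> every bracket involving \<open>t\<close> lies in \<open>N\<close> (write \<open>z = [p,q]\<close>
  with \<open>p, q\<close> orthogonal to \<open>u\<^sub>k\<close>), and Jacobi reduces the rest to the \<open>(8m\<^sup>3 - 2m)/3\<close> basic
  commutators \<open>[[e\<^sub>i,e\<^sub>j],e\<^sub>k]\<close>.  For \<open>m = 1\<close>, \<open>t \<equiv> [e\<^sub>1,e\<^sub>0]\<close> modulo \<open>R\<close> up to a scalar, which
  leaves two brackets of length 3 and three of length 4.

  Independence modulo \<open>N\<close> is detected in the free associative algebra on the \<open>x\<^sub>a\<close>: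
  substituting for each generator of \<open>F\<close> the image of its value in \<open>L\<close> under a suitable
  linear map sends \<open>N\<close> into degrees \<open>\<ge> 4\<close> (resp. \<open>\<ge> 5\<close> for \<open>m = 1\<close>), while the candidate
  basis elements have independent leading parts \<open>[[x\<^sub>i,x\<^sub>j],x\<^sub>k]\<close> (and \<open>[[[x\<^sub>1,x\<^sub>0],x\<^sub>i],x\<^sub>j]\<close>).\<close>

section \<open>Brackets in the free associative algebra\<close>

lemma sum_fun_apply: "(sum f A) x = sum (\<lambda>a. f a x) A"
  by (induction A rule: infinite_finite_induct) auto

lemma fa_scale_apply [simp]: "fa_scale c f w = c * f w"
  by (simp add: fa_scale_def)

interpretation FA: vector_space "fa_scale :: 'k::field \<Rightarrow> ('x list \<Rightarrow> 'k) \<Rightarrow> _"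
  by unfold_locales (auto simp: fun_eq_iff algebra_simps)

lemma fa_mul_add_left: "fa_mul (f + g) h = fa_mul f h + fa_mul g h"
  and fa_mul_add_right: "fa_mul f (g + h) = fa_mul f g + fa_mul f h"
  and fa_mul_diff_left: "fa_mul (f - g) h = fa_mul f h - fa_mul g h"
  and fa_mul_diff_right: "fa_mul f (g - h) = fa_mul f g - fa_mul f h"
  and fa_mul_minus_left: "fa_mul (- f) h = - fa_mul f h"
  and fa_mul_minus_right: "fa_mul f (- h) = - fa_mul f h"
  and fa_mul_scale_left: "fa_mul (fa_scale c f) h = fa_scale c (fa_mul f h)"
  and fa_mul_scale_right: "fa_mul f (fa_scale c h) = fa_scale c (fa_mul f h)"
  by (simp_all add: fa_mul_def fun_eq_iff algebra_simps sum.distrib sum_subtractf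
      sum_negf sum_distrib_left)

lemma fa_mul_zero [simp]: "fa_mul 0 h = 0" "fa_mul h 0 = 0"
  by (simp_all add: fa_mul_def fun_eq_iff)

lemma fa_mul_sum_left: "fa_mul (\<Sum>i\<in>I. f i) h = (\<Sum>i\<in>I. fa_mul (f i) h)"
proof (induction I rule: infinite_finite_induct)
  case (insert x F)
  then show ?case by (metis sum.insert fa_mul_add_left)
qed (simp_all add: fa_mul_def)

lemma fa_mul_sum_right: "fa_mul h (\<Sum>i\<in>I. f i) = (\<Sum>i\<in>I. fa_mul h (f i))"
proof (induction I rule: infinite_finite_induct)
  case (insert x F)
  then show ?case by (metis sum.insert fa_mul_add_right)
qed (simp_all add: fa_mul_def)

lemma fa_mul_assoc: "fa_mul (fa_mul f g) h = fa_mul f (fa_mul g h)"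
proof (rule ext)
  fix w :: "'a list"
  define n where "n = length w"
  have "fa_mul (fa_mul f g) h w =
     (\<Sum>i\<le>n. \<Sum>j\<le>i. f (take j w) * g (take (i - j) (drop j w)) * h (drop i w))"
    unfolding fa_mul_def n_def
    by (auto simp: sum_distrib_right min_def take_drop intro!: sum.cong)
  also have "\<dots> = (\<Sum>(j,l)\<in>{(j,l). j + l \<le> n}. f (take j w) * g (take l (drop j w)) * h (drop (j+l) w))"
    by (subst sum.triangle_reindex_eq) (auto intro!: sum.cong)
  also have "\<dots> = (\<Sum>j\<le>n. \<Sum>l\<le>n - j. f (take j w) * g (take l (drop j w)) * h (drop (j+l) w))"
  proof -
    have "{(j,l). j + l \<le> n} = Sigma {..n} (\<lambda>j. {..n-j})" by auto
    then show ?thesis by (simp add: sum.Sigma)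
  qed
  also have "\<dots> = fa_mul f (fa_mul g h) w"
    unfolding fa_mul_def n_def
    by (auto simp: sum_distrib_left mult.assoc add.commute intro!: sum.cong)
  finally show "fa_mul (fa_mul f g) h w = fa_mul f (fa_mul g h) w" .
qed

lemma fa_comm_add_left: "fa_comm (f + g) h = fa_comm f h + fa_comm g h"
  and fa_comm_add_right: "fa_comm f (g + h) = fa_comm f g + fa_comm f h"
  and fa_comm_diff_left: "fa_comm (f - g) h = fa_comm f h - fa_comm g h"
  and fa_comm_diff_right: "fa_comm f (g - h) = fa_comm f g - fa_comm f h"
  and fa_comm_minus_left: "fa_comm (- f) h = - fa_comm f h"
  and fa_comm_scale_left: "fa_comm (fa_scale c f) h = fa_scale c (fa_comm f h)"
  and fa_comm_scale_right: "fa_comm f (fa_scale c h) = fa_scale c (fa_comm f h)"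
  by (simp_all add: fa_comm_def fa_mul_add_left fa_mul_add_right fa_mul_diff_left
      fa_mul_diff_right fa_mul_minus_left fa_mul_minus_right fa_mul_scale_left
      fa_mul_scale_right fun_eq_iff algebra_simps)

lemma fa_comm_zero [simp]: "fa_comm 0 h = 0" "fa_comm h 0 = 0"
  by (simp_all add: fa_comm_def)

lemma fa_comm_self [simp]: "fa_comm f f = 0"
  by (simp add: fa_comm_def)

lemma fa_comm_antisym: "fa_comm g f = - fa_comm f g"
  by (simp add: fa_comm_def)

lemma fa_jacobi: "fa_comm (fa_comm a b) c = fa_comm (fa_comm a c) b + fa_comm a (fa_comm b c)"
  by (simp add: fa_comm_def fa_mul_diff_left fa_mul_diff_right fa_mul_assoc algebra_simps)

definition fsupp :: "('x list \<Rightarrow> 'k::field) \<Rightarrow> bool" where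
  "fsupp f \<longleftrightarrow> finite {w. f w \<noteq> 0}"

definition vanishes_below :: "nat \<Rightarrow> ('x list \<Rightarrow> 'k::field) \<Rightarrow> bool" where
  "vanishes_below n f \<longleftrightarrow> (\<forall>w. length w < n \<longrightarrow> f w = 0)"

lemma fsupp_zero [simp]: "fsupp 0"
  by (simp add: fsupp_def)

lemma fsupp_add: "fsupp f \<Longrightarrow> fsupp g \<Longrightarrow> fsupp (f + g)"
  and fsupp_diff: "fsupp f \<Longrightarrow> fsupp g \<Longrightarrow> fsupp (f - g)"
  unfolding fsupp_def
  by (rule finite_subset[of _ "{w. f w \<noteq> 0} \<union> {w. g w \<noteq> 0}"]; force)+

lemma fsupp_scale: "fsupp f \<Longrightarrow> fsupp (fa_scale c f)"
  unfolding fsupp_def by (rule finite_subset[of _ "{w. f w \<noteq> 0}"]) auto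

lemma fsupp_sum: "(\<And>i. i \<in> I \<Longrightarrow> fsupp (f i)) \<Longrightarrow> fsupp (\<Sum>i\<in>I. f i)"
  by (induction I rule: infinite_finite_induct) (auto intro: fsupp_add)

lemma fsupp_mul: "fsupp f \<Longrightarrow> fsupp g \<Longrightarrow> fsupp (fa_mul f g)"
  unfolding fsupp_def
proof (rule finite_subset[of _ "(\<lambda>(u,v). u @ v) ` ({w. f w \<noteq> 0} \<times> {w. g w \<noteq> 0})"])
  show "{w. fa_mul f g w \<noteq> 0} \<subseteq> (\<lambda>(u,v). u @ v) ` ({w. f w \<noteq> 0} \<times> {w. g w \<noteq> 0})"
  proof
    fix w assume "w \<in> {w. fa_mul f g w \<noteq> 0}"
    then obtain i where "f (take i w) * g (drop i w) \<noteq> 0"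
      unfolding fa_mul_def by (auto elim: sum.not_neutral_contains_not_neutral)
    then show "w \<in> (\<lambda>(u,v). u @ v) ` ({w. f w \<noteq> 0} \<times> {w. g w \<noteq> 0})"
      by (auto intro!: image_eqI[of _ _ "(take i w, drop i w)"])
  qed
qed auto

lemma fsupp_comm: "fsupp f \<Longrightarrow> fsupp g \<Longrightarrow> fsupp (fa_comm f g)"
  unfolding fa_comm_def by (intro fsupp_diff fsupp_mul)

lemma vanishes_below_zero [simp]: "vanishes_below n 0"
  by (simp add: vanishes_below_def)

lemma vanishes_below_add: "vanishes_below n f \<Longrightarrow> vanishes_below n g \<Longrightarrow> vanishes_below n (f + g)"
  and vanishes_below_diff: "vanishes_below n f \<Longrightarrow> vanishes_below n g \<Longrightarrow> vanishes_below n (f - g)"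
  and vanishes_below_scale: "vanishes_below n f \<Longrightarrow> vanishes_below n (fa_scale c f)"
  and vanishes_below_mono: "vanishes_below n f \<Longrightarrow> k \<le> n \<Longrightarrow> vanishes_below k f"
  by (simp_all add: vanishes_below_def)

lemma vanishes_below_sum:
  "(\<And>i. i \<in> I \<Longrightarrow> vanishes_below n (f i)) \<Longrightarrow> vanishes_below n (\<Sum>i\<in>I. f i)"
  by (simp add: vanishes_below_def sum_fun_apply)

lemma vanishes_below_mul:
  assumes f: "vanishes_below i f" and g: "vanishes_below j g"
  shows "vanishes_below (i + j) (fa_mul f g)"
  unfolding vanishes_below_def fa_mul_def
proof (intro allI impI sum.neutral ballI)
  fix w :: "'a list" and k
  assume w: "length w < i + j" and k: "k \<in> {..length w}"
  show "f (take k w) * g (drop k w) = 0"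
  proof (cases "k < i")
    case True
    then show ?thesis using f k by (simp add: vanishes_below_def)
  next
    case False
    then have "length (drop k w) < j" using w k by auto
    then show ?thesis using g by (simp add: vanishes_below_def)
  qed
qed

lemma vanishes_below_comm:
  "vanishes_below i f \<Longrightarrow> vanishes_below j g \<Longrightarrow> vanishes_below (i + j) (fa_comm f g)"
  unfolding fa_comm_def
  by (metis add.commute vanishes_below_diff vanishes_below_mul)

lemma vanishes_below_comm_diff:
  assumes "vanishes_below a p'" "vanishes_below b q"
    and "vanishes_below (Suc a) (p - p')" "vanishes_below (Suc b) (q - q')"
  shows "vanishes_below (Suc (a + b)) (fa_comm p q - fa_comm p' q')"
proof -
  have "fa_comm p q - fa_comm p' q' = fa_comm (p - p') q + fa_comm p' (q - q')"
    by (simp add: fa_comm_diff_left fa_comm_diff_right)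
  moreover have "vanishes_below (Suc a + b) (fa_comm (p - p') q)"
    using assms by (intro vanishes_below_comm)
  moreover have "vanishes_below (a + Suc b) (fa_comm p' (q - q'))"
    using assms by (intro vanishes_below_comm)
  ultimately show ?thesis by (simp add: vanishes_below_add)
qed

lemma fsupp_fa_gen: "fsupp (fa_gen x)"
  unfolding fsupp_def fa_gen_def by (rule finite_subset[of _ "{[x]}"]) auto

lemma vanishes_below_fa_gen: "vanishes_below 1 (fa_gen x)"
  unfolding vanishes_below_def fa_gen_def by auto

lemma free_lie_fsupp: "f \<in> free_lie X \<Longrightarrow> fsupp f"
  by (induction rule: free_lie.induct)
    (blast intro: fsupp_zero fsupp_fa_gen fsupp_add fsupp_scale fsupp_comm)+

lemma free_lie_subspace: "FA.subspace (free_lie X)"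
  unfolding FA.subspace_def by (auto intro: free_lie.intros)

lemma free_lie_diff: "f \<in> free_lie X \<Longrightarrow> g \<in> free_lie X \<Longrightarrow> f - g \<in> free_lie X"
  by (rule FA.subspace_diff[OF free_lie_subspace])

lemma free_lie_sum: "(\<And>i. i \<in> I \<Longrightarrow> f i \<in> free_lie X) \<Longrightarrow> (\<Sum>i\<in>I. f i) \<in> free_lie X"
  using FA.subspace_sum[OF free_lie_subspace] by blast

section \<open>Substitution homomorphisms\<close>

definition fa_word :: "'x list \<Rightarrow> 'x list \<Rightarrow> 'k::field" where
  "fa_word u = (\<lambda>w. if w = u then 1 else 0)"

lemma fa_gen_eq_fa_word: "fa_gen x = fa_word [x]"
  by (simp add: fa_gen_def fa_word_def fun_eq_iff)

lemma fa_word_mul: "fa_mul (fa_word u) (fa_word v) = fa_word (u @ v)"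
proof (rule ext)
  fix w :: "'a list"
  have split_iff: "(take i w = u \<and> drop i w = v) \<longleftrightarrow> (i = length u \<and> w = u @ v)"
    if "i \<le> length w" for i
    using that by (metis append_eq_conv_conj append_take_drop_id length_take min.absorb2)
  have "fa_mul (fa_word u) (fa_word v) w = (\<Sum>i\<le>length w. if i = length u \<and> w = u @ v then 1 else 0)"
    unfolding fa_mul_def fa_word_def by (intro sum.cong refl) (auto simp: split_iff)
  then show "fa_mul (fa_word u) (fa_word v) w = fa_word (u @ v) w"
    by (auto simp: fa_word_def)
qed

lemma fa_comm_fa_gen: "fa_comm (fa_gen a) (fa_gen b) = fa_word [a, b] - fa_word [b, a]"
  by (simp add: fa_comm_def fa_gen_eq_fa_word fa_word_mul)

lemma fa_comm_length_2:
  "p [] = 0 \<Longrightarrow> q [] = 0 \<Longrightarrow> fa_comm p q [a, b] = p [a] * q [b] - q [a] * p [b]"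
  by (simp add: fa_comm_def fa_mul_def atMost_Suc)

lemma fa_word_Nil_mul: "fa_mul (fa_word []) f = f"
proof (rule ext)
  fix w
  have "fa_mul (fa_word []) f w = (\<Sum>i\<le>length w. if i = 0 then f w else 0)"
    unfolding fa_mul_def fa_word_def by (intro sum.cong refl) auto
  then show "fa_mul (fa_word []) f w = f w" by simp
qed

lemma fa_mul_fa_word_Nil: "fa_mul f (fa_word []) = f"
proof (rule ext)
  fix w
  have "fa_mul f (fa_word []) w = (\<Sum>i\<le>length w. if i = length w then f w else 0)"
    unfolding fa_mul_def fa_word_def by (intro sum.cong refl) auto
  then show "fa_mul f (fa_word []) w = f w" by simp
qed

lemma fa_expand: "fsupp f \<Longrightarrow> f = (\<Sum>w\<in>{w. f w \<noteq> 0}. fa_scale (f w) (fa_word w))"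
  unfolding fsupp_def
  by (auto simp: fun_eq_iff sum_fun_apply fa_word_def if_distrib cong: if_cong)

text \<open>The algebra homomorphism \<open>k<X> \<rightarrow> k<Y>\<close> (on finitely supported elements) extending
  \<open>\<theta> : X \<rightarrow> k<Y>\<close>.\<close>

primrec subst_word :: "('x \<Rightarrow> ('y list \<Rightarrow> 'k::field)) \<Rightarrow> 'x list \<Rightarrow> 'y list \<Rightarrow> 'k" where
  "subst_word \<theta> [] = fa_word []"
| "subst_word \<theta> (x # xs) = fa_mul (\<theta> x) (subst_word \<theta> xs)"

definition fa_subst :: "('x \<Rightarrow> ('y list \<Rightarrow> 'k::field)) \<Rightarrow> ('x list \<Rightarrow> 'k) \<Rightarrow> 'y list \<Rightarrow> 'k" where
  "fa_subst \<theta> f = (\<Sum>w\<in>{w. f w \<noteq> 0}. fa_scale (f w) (subst_word \<theta> w))"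

lemma subst_word_append: "subst_word \<theta> (u @ v) = fa_mul (subst_word \<theta> u) (subst_word \<theta> v)"
  by (induction u) (simp_all add: fa_word_Nil_mul fa_mul_assoc)

lemma fa_subst_eq:
  "finite S \<Longrightarrow> {w. f w \<noteq> 0} \<subseteq> S \<Longrightarrow> fa_subst \<theta> f = (\<Sum>w\<in>S. fa_scale (f w) (subst_word \<theta> w))"
  unfolding fa_subst_def by (rule sum.mono_neutral_left) (auto simp: fun_eq_iff)

lemma fa_subst_add:
  assumes "fsupp f" "fsupp g"
  shows "fa_subst \<theta> (f + g) = fa_subst \<theta> f + fa_subst \<theta> g"
proof -
  define S where "S = {w. f w \<noteq> 0} \<union> {w. g w \<noteq> 0}"
  have S: "finite S" using assms by (simp add: S_def fsupp_def)
  have "fa_subst \<theta> (f + g) = (\<Sum>w\<in>S. fa_scale ((f + g) w) (subst_word \<theta> w))"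
    by (rule fa_subst_eq[OF S]) (auto simp: S_def)
  also have "\<dots> = (\<Sum>w\<in>S. fa_scale (f w) (subst_word \<theta> w)) + (\<Sum>w\<in>S. fa_scale (g w) (subst_word \<theta> w))"
    by (simp add: sum.distrib[symmetric] FA.scale_left_distrib)
  also have "\<dots> = fa_subst \<theta> f + fa_subst \<theta> g"
    by (simp add: fa_subst_eq[OF S] S_def)
  finally show ?thesis .
qed

lemma fa_subst_scale: "fa_subst \<theta> (fa_scale c f) = fa_scale c (fa_subst \<theta> f)"
proof (cases "c = 0")
  case True
  then show ?thesis by (simp add: fa_subst_def fun_eq_iff)
next
  case False
  then have "{w. fa_scale c f w \<noteq> 0} = {w. f w \<noteq> 0}" by auto
  then show ?thesis by (simp add: fa_subst_def FA.scale_sum_right FA.scale_scale)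
qed

lemma fa_subst_diff:
  assumes "fsupp f" "fsupp g"
  shows "fa_subst \<theta> (f - g) = fa_subst \<theta> f - fa_subst \<theta> g"
proof -
  have "f - g = f + fa_scale (-1) g" by (simp add: fun_eq_iff)
  then have "fa_subst \<theta> (f - g) = fa_subst \<theta> f + fa_scale (-1) (fa_subst \<theta> g)"
    using assms by (simp only: fa_subst_add fsupp_scale fa_subst_scale)
  then show ?thesis by (simp add: fun_eq_iff)
qed

lemma fa_subst_sum:
  "(\<And>i. i \<in> I \<Longrightarrow> fsupp (f i)) \<Longrightarrow> fa_subst \<theta> (\<Sum>i\<in>I. f i) = (\<Sum>i\<in>I. fa_subst \<theta> (f i))"
proof (induction I rule: infinite_finite_induct)
  case (insert x F)
  have "fa_subst \<theta> (f x + sum f F) = fa_subst \<theta> (f x) + fa_subst \<theta> (sum f F)"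
    using insert.prems by (intro fa_subst_add fsupp_sum) auto
  also have "fa_subst \<theta> (sum f F) = (\<Sum>i\<in>F. fa_subst \<theta> (f i))"
    using insert by simp
  finally show ?case unfolding sum.insert[OF insert.hyps] .
qed (simp_all add: fa_subst_def)

lemma fa_subst_zero [simp]: "fa_subst \<theta> 0 = 0"
  by (simp add: fa_subst_def)

lemma fa_subst_fa_word: "fa_subst \<theta> (fa_word u) = subst_word \<theta> u"
  by (subst fa_subst_eq[of "{u}"]) (auto simp: fa_word_def)

lemma fa_subst_fa_gen: "fa_subst \<theta> (fa_gen x) = \<theta> x"
  by (simp add: fa_gen_eq_fa_word fa_subst_fa_word fa_mul_fa_word_Nil)

lemma fa_subst_mul:
  assumes f: "fsupp f" and g: "fsupp g"
  shows "fa_subst \<theta> (fa_mul f g) = fa_mul (fa_subst \<theta> f) (fa_subst \<theta> g)"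
proof -
  define S where "S = {w. f w \<noteq> 0}"
  define T where "T = {w. g w \<noteq> 0}"
  have S: "finite S" and T: "finite T" using f g by (auto simp: S_def T_def fsupp_def)
  have fsupp_word: "fsupp (fa_word u)" for u :: "'a list"
    unfolding fsupp_def fa_word_def by (rule finite_subset[of _ "{u}"]) auto
  have "fa_mul f g = fa_mul (\<Sum>u\<in>S. fa_scale (f u) (fa_word u)) (\<Sum>v\<in>T. fa_scale (g v) (fa_word v))"
    using fa_expand[OF f] fa_expand[OF g] by (simp add: S_def T_def)
  also have "\<dots> = (\<Sum>u\<in>S. \<Sum>v\<in>T. fa_scale (f u * g v) (fa_word (u @ v)))"
    by (simp add: fa_mul_sum_left fa_mul_sum_right fa_mul_scale_left fa_mul_scale_right
        fa_word_mul FA.scale_sum_right FA.scale_scale mult.commute sum.swap[of _ T S])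
  finally have fg: "fa_mul f g = (\<Sum>u\<in>S. \<Sum>v\<in>T. fa_scale (f u * g v) (fa_word (u @ v)))" .
  have "fa_subst \<theta> (fa_mul f g) = (\<Sum>u\<in>S. \<Sum>v\<in>T. fa_scale (f u * g v) (subst_word \<theta> (u @ v)))"
    unfolding fg
    by (simp add: fa_subst_sum fsupp_sum fsupp_scale fsupp_word fa_subst_scale fa_subst_fa_word)
  also have "\<dots> = fa_mul (\<Sum>u\<in>S. fa_scale (f u) (subst_word \<theta> u)) (\<Sum>v\<in>T. fa_scale (g v) (subst_word \<theta> v))"
    by (simp add: fa_mul_sum_left fa_mul_sum_right fa_mul_scale_left fa_mul_scale_right
        subst_word_append FA.scale_sum_right FA.scale_scale mult.commute sum.swap[of _ T S])
  also have "\<dots> = fa_mul (fa_subst \<theta> f) (fa_subst \<theta> g)"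
    by (simp add: fa_subst_eq[OF S] fa_subst_eq[OF T] S_def T_def)
  finally show ?thesis .
qed

lemma fa_subst_comm:
  "fsupp f \<Longrightarrow> fsupp g \<Longrightarrow> fa_subst \<theta> (fa_comm f g) = fa_comm (fa_subst \<theta> f) (fa_subst \<theta> g)"
  unfolding fa_comm_def by (simp add: fa_subst_diff fsupp_mul fa_subst_mul)

section \<open>Free presentations\<close>

abbreviation LP :: "('x list \<Rightarrow> 'k::field) set \<Rightarrow> ('x list \<Rightarrow> 'k) set \<Rightarrow> ('x list \<Rightarrow> 'k) set" where
  "LP A B \<equiv> lie_prod fa_scale fa_comm A B"

lemma LP_base: "a \<in> A \<Longrightarrow> b \<in> B \<Longrightarrow> fa_comm a b \<in> LP A B"
  unfolding lie_prod_def by (rule FA.span_base) blast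

lemma LP_subspace: "FA.subspace (LP A B)"
  unfolding lie_prod_def by (rule FA.subspace_span)

lemma LP_minimal:
  "FA.subspace P \<Longrightarrow> (\<And>a b. a \<in> A \<Longrightarrow> b \<in> B \<Longrightarrow> fa_comm a b \<in> P) \<Longrightarrow> LP A B \<subseteq> P"
  unfolding lie_prod_def by (rule FA.span_minimal) auto

lemma LP_free_lie: "A \<subseteq> free_lie X \<Longrightarrow> B \<subseteq> free_lie X \<Longrightarrow> LP A B \<subseteq> free_lie X"
  by (rule LP_minimal[OF free_lie_subspace]) (auto intro: free_lie.bracket)

lemma subspace_vimage:
  fixes G :: "('x list \<Rightarrow> 'k::field) \<Rightarrow> ('y list \<Rightarrow> 'k)"
  assumes S: "FA.subspace S" and add: "\<And>x y. G (x + y) = G x + G y"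
    and scale: "\<And>c x. G (fa_scale c x) = fa_scale c (G x)"
  shows "FA.subspace {x. G x \<in> S}"
proof -
  have "G 0 = 0"
    using scale[of 0 0] by (simp add: fun_eq_iff)
  then show ?thesis using S unfolding FA.subspace_def by (auto simp: add scale)
qed

lemma subspace_comm_left_vimage: "FA.subspace S \<Longrightarrow> FA.subspace {x. fa_comm x c \<in> S}"
  by (rule subspace_vimage) (auto simp: fa_comm_add_left fa_comm_scale_left)

lemma LP_LP_minimal:
  assumes P: "FA.subspace P"
    and gen: "\<And>a b c. a \<in> A \<Longrightarrow> b \<in> B \<Longrightarrow> c \<in> C \<Longrightarrow> fa_comm (fa_comm a b) c \<in> P"
  shows "LP (LP A B) C \<subseteq> P"
proof (rule LP_minimal[OF P])
  fix u c assume u: "u \<in> LP A B" and c: "c \<in> C"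
  have "LP A B \<subseteq> {x. fa_comm x c \<in> P}"
    by (rule LP_minimal[OF subspace_comm_left_vimage[OF P]]) (use gen c in auto)
  then show "fa_comm u c \<in> P" using u by auto
qed

lemma comm3_in_subspace_span:
  assumes S: "FA.subspace S"
    and gen: "\<And>p q s. p \<in> V \<Longrightarrow> q \<in> V \<Longrightarrow> s \<in> V \<Longrightarrow> fa_comm (fa_comm p q) s \<in> S"
    and a: "a \<in> FA.span V" and b: "b \<in> FA.span V" and c: "c \<in> FA.span V"
  shows "fa_comm (fa_comm a b) c \<in> S"
proof -
  have span1: "fa_comm (fa_comm a q) s \<in> S" if "a \<in> FA.span V" "q \<in> V" "s \<in> V" for a q s
  proof -
    have "FA.span V \<subseteq> {a. fa_comm (fa_comm a q) s \<in> S}"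
      by (rule FA.span_minimal) (use gen that in \<open>auto intro!: subspace_vimage[OF S]
            simp: fa_comm_add_left fa_comm_scale_left\<close>)
    then show ?thesis using that by auto
  qed
  have span2: "fa_comm (fa_comm a b) s \<in> S" if "a \<in> FA.span V" "b \<in> FA.span V" "s \<in> V" for a b s
  proof -
    have "FA.span V \<subseteq> {b. fa_comm (fa_comm a b) s \<in> S}"
      by (rule FA.span_minimal) (use span1 that in \<open>auto intro!: subspace_vimage[OF S]
            simp: fa_comm_add_left fa_comm_add_right fa_comm_scale_left fa_comm_scale_right\<close>)
    then show ?thesis using that by auto
  qed
  have "FA.span V \<subseteq> {c. fa_comm (fa_comm a b) c \<in> S}"
    by (rule FA.span_minimal) (use span2 a b in \<open>auto intro!: subspace_vimage[OF S]
          simp: fa_comm_add_right fa_comm_scale_right\<close>)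
  then show ?thesis using c by auto
qed

locale presentation =
  fixes scale :: "'k::field \<Rightarrow> 'l::ab_group_add \<Rightarrow> 'l"
    and br :: "'l \<Rightarrow> 'l \<Rightarrow> 'l"
    and X :: "'x set"
    and \<phi> :: "('x list \<Rightarrow> 'k) \<Rightarrow> 'l"
  assumes lie: "lie_algebra scale br"
    and presentation: "free_presentation X scale br \<phi>"
begin

abbreviation "F \<equiv> free_lie X :: ('x list \<Rightarrow> 'k) set"
abbreviation "R \<equiv> pres_kernel X \<phi>"
abbreviation "K \<equiv> LP R F"
abbreviation "N \<equiv> LP K F"

sublocale L: vector_space scale
  using lie by (simp add: lie_algebra_def)

lemma br_add_left: "br (x + y) z = br x z + br y z"
  and br_add_right: "br x (y + z) = br x y + br x z"
  and br_scale_left: "br (scale a x) y = scale a (br x y)"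
  and br_scale_right: "br x (scale a y) = scale a (br x y)"
  and br_self: "br x x = 0"
  using lie by (auto simp: lie_algebra_def)

lemma phi_add: "f \<in> F \<Longrightarrow> g \<in> F \<Longrightarrow> \<phi> (f + g) = \<phi> f + \<phi> g"
  and phi_scale: "f \<in> F \<Longrightarrow> \<phi> (fa_scale c f) = scale c (\<phi> f)"
  and phi_comm: "f \<in> F \<Longrightarrow> g \<in> F \<Longrightarrow> \<phi> (fa_comm f g) = br (\<phi> f) (\<phi> g)"
  and phi_surj: "\<phi> ` F = UNIV"
  using presentation by (auto simp: free_presentation_def)

lemma phi_zero: "\<phi> 0 = 0"
  using phi_add[OF free_lie.zero free_lie.zero] by simp

lemma phi_diff: "f \<in> F \<Longrightarrow> g \<in> F \<Longrightarrow> \<phi> (f - g) = \<phi> f - \<phi> g"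
  using phi_add[of "f - g" g] free_lie_diff[of f X g] by (simp add: eq_diff_eq)

lemma phi_sum: "(\<And>i. i \<in> I \<Longrightarrow> f i \<in> F) \<Longrightarrow> \<phi> (\<Sum>i\<in>I. f i) = (\<Sum>i\<in>I. \<phi> (f i))"
proof (induction I rule: infinite_finite_induct)
  case (insert x I)
  then have "\<phi> (f x + sum f I) = \<phi> (f x) + (\<Sum>i\<in>I. \<phi> (f i))"
    by (simp add: phi_add free_lie_sum)
  then show ?case unfolding sum.insert[OF insert.hyps] .
qed (simp_all add: phi_zero)

lemma ex_lift: "\<exists>f. f \<in> F \<and> \<phi> f = y"
  using phi_surj by (metis UNIV_I imageE)

lemma R_iff: "f \<in> R \<longleftrightarrow> f \<in> F \<and> \<phi> f = 0"
  by (simp add: pres_kernel_def)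

lemma R_subspace: "FA.subspace R"
  unfolding FA.subspace_def pres_kernel_def
  by (auto intro: free_lie.intros simp: phi_zero phi_add phi_scale)

lemma R_subset: "R \<subseteq> F"
  by (auto simp: pres_kernel_def)

lemma K_subset: "K \<subseteq> F"
  by (rule LP_free_lie) (use R_subset in auto)

lemma comm_R_F_in_K: "r \<in> R \<Longrightarrow> a \<in> F \<Longrightarrow> fa_comm r a \<in> K"
  by (rule LP_base)

lemma comm_F_R_in_K: "r \<in> R \<Longrightarrow> a \<in> F \<Longrightarrow> fa_comm a r \<in> K"
  using FA.subspace_neg[OF LP_subspace comm_R_F_in_K] by (simp add: fa_comm_antisym[of a r])

lemma comm_K_F_in_N: "k \<in> K \<Longrightarrow> b \<in> F \<Longrightarrow> fa_comm k b \<in> N"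
  by (rule LP_base)

lemma comm_F_K_in_N: "k \<in> K \<Longrightarrow> b \<in> F \<Longrightarrow> fa_comm b k \<in> N"
  using FA.subspace_neg[OF LP_subspace comm_K_F_in_N] by (simp add: fa_comm_antisym[of b k])

lemma comm_F_F_R_in_N:
  assumes "r \<in> R" "a \<in> F" "b \<in> F"
  shows "fa_comm (fa_comm a b) r \<in> N"
proof -
  have "fa_comm (fa_comm a r) b \<in> N" "fa_comm a (fa_comm b r) \<in> N"
    using assms by (auto intro: comm_K_F_in_N comm_F_K_in_N comm_F_R_in_K)
  then show ?thesis
    using FA.subspace_add[OF LP_subspace] by (metis fa_jacobi)
qed

text \<open>Changing one entry of a triple bracket by an element of \<open>R\<close> changes the bracket by an
  element of \<open>N\<close>.\<close>
lemma F3_subset_by_generators_mod_R: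
  assumes V: "V \<subseteq> F"
    and spans: "\<And>f. f \<in> F \<Longrightarrow> \<exists>v \<in> FA.span V. f - v \<in> R"
    and S: "FA.subspace S" and NS: "N \<subseteq> S"
    and gen: "\<And>p q s. p \<in> V \<Longrightarrow> q \<in> V \<Longrightarrow> s \<in> V \<Longrightarrow> fa_comm (fa_comm p q) s \<in> S"
  shows "LP (LP F F) F \<subseteq> S"
proof (rule LP_LP_minimal[OF S])
  have span_V: "FA.span V \<subseteq> F"
    using V FA.span_mono FA.span_eq_iff free_lie_subspace by metis
  fix a b c assume a: "a \<in> F" and b: "b \<in> F" and c: "c \<in> F"
  obtain a' where a': "a' \<in> FA.span V" "a - a' \<in> R" using spans[OF a] by blast
  obtain b' where b': "b' \<in> FA.span V" "b - b' \<in> R" using spans[OF b] by blast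
  obtain c' where c': "c' \<in> FA.span V" "c - c' \<in> R" using spans[OF c] by blast
  have "fa_comm (fa_comm a b) c = fa_comm (fa_comm (a - a') b) c + fa_comm (fa_comm a' (b - b')) c
        + fa_comm (fa_comm a' b') (c - c') + fa_comm (fa_comm a' b') c'"
    by (simp add: fa_comm_diff_left fa_comm_diff_right)
  moreover have "fa_comm (fa_comm (a - a') b) c \<in> S"
    using a' b c NS by (auto intro: comm_K_F_in_N comm_R_F_in_K)
  moreover have "fa_comm (fa_comm a' (b - b')) c \<in> S"
    using a' b' c span_V NS by (auto intro: comm_K_F_in_N comm_F_R_in_K)
  moreover have "fa_comm (fa_comm a' b') (c - c') \<in> S"
    using a' b' c' span_V NS by (auto intro: comm_F_F_R_in_N)
  moreover have "fa_comm (fa_comm a' b') c' \<in> S"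
    by (rule comm3_in_subspace_span[OF S gen a'(1) b'(1) c'(1)])
  ultimately show "fa_comm (fa_comm a b) c \<in> S"
    using FA.subspace_add[OF S] by metis
qed

end

definition comm3 :: "(nat \<Rightarrow> 'x list \<Rightarrow> 'k::field) \<Rightarrow> nat \<times> nat \<times> nat \<Rightarrow> 'x list \<Rightarrow> 'k" where
  "comm3 f = (\<lambda>(i, j, k). fa_comm (fa_comm (f i) (f j)) (f k))"

text \<open>\<open>\<Theta>\<close> substitutes \<open>\<psi> (\<phi> x)\<close> for each generator \<open>x\<close>, where the linear map
  \<open>\<psi> : L \<rightarrow> k<Y>\<close> is compatible with brackets below degree \<open>d\<close>.  Then \<open>\<Theta> \<equiv> \<psi> \<circ> \<phi>\<close> below
  degree \<open>d\<close> on all of \<open>F\<close>, so \<open>\<Theta>\<close> kills \<open>R\<close> below degree \<open>d\<close> and \<open>N = [[R,F],F]\<close> below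
  degree \<open>d + 2\<close>.\<close>
locale presentation_lift = presentation scale br X \<phi>
  for scale :: "'k::field \<Rightarrow> 'l::ab_group_add \<Rightarrow> 'l" and br X \<phi> +
  fixes \<psi> :: "'l \<Rightarrow> 'y list \<Rightarrow> 'k"
    and d :: nat
  assumes psi_add: "\<psi> (x + y) = \<psi> x + \<psi> y"
    and psi_scale: "\<psi> (scale c x) = fa_scale c (\<psi> x)"
    and psi_vanishes_below_1: "vanishes_below 1 (\<psi> x)"
    and psi_br: "vanishes_below 1 p \<Longrightarrow> vanishes_below 1 q \<Longrightarrow>
      vanishes_below d (p - \<psi> x) \<Longrightarrow> vanishes_below d (q - \<psi> y) \<Longrightarrow>
      vanishes_below d (fa_comm p q - \<psi> (br x y))"
begin

abbreviation \<Theta> where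
  "\<Theta> \<equiv> fa_subst (\<lambda>x. \<psi> (\<phi> (fa_gen x)))"

lemma psi_zero: "\<psi> 0 = 0"
  using psi_scale[of 0 0] by (simp add: fun_eq_iff)

lemma Theta_comm: "f \<in> F \<Longrightarrow> g \<in> F \<Longrightarrow> \<Theta> (fa_comm f g) = fa_comm (\<Theta> f) (\<Theta> g)"
  by (simp add: fa_subst_comm free_lie_fsupp)

lemma Theta_approx: "f \<in> F \<Longrightarrow> vanishes_below 1 (\<Theta> f) \<and> vanishes_below d (\<Theta> f - \<psi> (\<phi> f))"
proof (induction rule: free_lie.induct)
  case (gen x)
  show ?case
    by (simp only: fa_subst_fa_gen psi_vanishes_below_1 diff_self vanishes_below_zero simp_thms)
next
  case zero
  then show ?case by (simp add: zero_fun_def[symmetric] phi_zero psi_zero)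
next
  case (add f g)
  have Theta: "\<Theta> (f + g) = \<Theta> f + \<Theta> g"
    using add.hyps by (intro fa_subst_add free_lie_fsupp)
  have psi: "\<psi> (\<phi> (f + g)) = \<psi> (\<phi> f) + \<psi> (\<phi> g)"
    using add.hyps by (simp only: phi_add psi_add)
  show ?case
    unfolding Theta psi add_diff_add using add.IH by (blast intro: vanishes_below_add)
next
  case (smult f c)
  have psi: "\<psi> (\<phi> (fa_scale c f)) = fa_scale c (\<psi> (\<phi> f))"
    using smult.hyps by (simp only: phi_scale psi_scale)
  show ?case
    unfolding fa_subst_scale psi FA.scale_right_diff_distrib[symmetric]
    using smult.IH by (blast intro: vanishes_below_scale)
next
  case (bracket f g)
  have comm: "\<Theta> (fa_comm f g) = fa_comm (\<Theta> f) (\<Theta> g)"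
    using bracket.hyps by (rule Theta_comm)
  have "vanishes_below (1 + 1) (fa_comm (\<Theta> f) (\<Theta> g))"
    using bracket.IH by (blast intro: vanishes_below_comm)
  then have "vanishes_below 1 (\<Theta> (fa_comm f g))"
    unfolding comm by (rule vanishes_below_mono) simp
  moreover have "vanishes_below d (\<Theta> (fa_comm f g) - \<psi> (\<phi> (fa_comm f g)))"
    unfolding comm phi_comm[OF bracket.hyps] using bracket.IH by (blast intro: psi_br)
  ultimately show ?case ..
qed

lemma subspace_Theta_vanishes_below: "FA.subspace {f. fsupp f \<and> vanishes_below n (\<Theta> f)}"
  unfolding FA.subspace_def
  by (auto simp: fsupp_add fsupp_scale fa_subst_add fa_subst_scale vanishes_below_add
      vanishes_below_scale)

lemma Theta_R: "r \<in> R \<Longrightarrow> vanishes_below d (\<Theta> r)"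
  using Theta_approx[of r] by (simp add: R_iff psi_zero)

lemma Theta_LP_F:
  assumes A: "A \<subseteq> F" "\<And>a. a \<in> A \<Longrightarrow> vanishes_below n (\<Theta> a)"
  shows "b \<in> LP A F \<Longrightarrow> vanishes_below (Suc n) (\<Theta> b)"
proof -
  have "LP A F \<subseteq> {f. fsupp f \<and> vanishes_below (n + 1) (\<Theta> f)}"
  proof (rule LP_minimal[OF subspace_Theta_vanishes_below], safe)
    fix a c assume a: "a \<in> A" and c: "c \<in> F"
    then show "fsupp (fa_comm a c)"
      using A by (auto intro: fsupp_comm free_lie_fsupp)
    have "vanishes_below (n + 1) (fa_comm (\<Theta> a) (\<Theta> c))"
      using A(2)[OF a] Theta_approx[OF c] by (blast intro: vanishes_below_comm)
    then show "vanishes_below (n + 1) (\<Theta> (fa_comm a c))"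
      using a c A by (auto simp: Theta_comm)
  qed
  then show "b \<in> LP A F \<Longrightarrow> vanishes_below (Suc n) (\<Theta> b)" by auto
qed

lemma Theta_N: "n \<in> N \<Longrightarrow> vanishes_below (Suc (Suc d)) (\<Theta> n)"
  using Theta_LP_F[OF K_subset Theta_LP_F[OF R_subset Theta_R]] by blast

lemma Theta_comm_approx:
  assumes d: "2 \<le> d" and fg: "f \<in> F" "g \<in> F"
    and P: "vanishes_below a P" "vanishes_below (Suc a) (\<Theta> f - P)"
  shows "vanishes_below (Suc (Suc a)) (\<Theta> (fa_comm f g) - fa_comm P (\<psi> (\<phi> g)))"
proof -
  have "vanishes_below (Suc 1) (\<Theta> g - \<psi> (\<phi> g))" "vanishes_below 1 (\<Theta> g)"
    using Theta_approx[OF fg(2)] d by (auto intro: vanishes_below_mono)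
  then have "vanishes_below (Suc (a + 1)) (fa_comm (\<Theta> f) (\<Theta> g) - fa_comm P (\<psi> (\<phi> g)))"
    using P by (intro vanishes_below_comm_diff)
  then show ?thesis using fg by (simp add: Theta_comm)
qed

lemma Theta_comm3_approx:
  assumes d: "2 \<le> d" and f: "\<And>a. f a \<in> F"
  shows "vanishes_below 4 (\<Theta> (comm3 f \<tau>) - comm3 (\<lambda>a. \<psi> (\<phi> (f a))) \<tau>)"
proof (cases \<tau>)
  case (fields i j k)
  have "vanishes_below (Suc 1) (\<Theta> (f i) - \<psi> (\<phi> (f i)))"
    using Theta_approx[OF f[of i]] d by (auto intro: vanishes_below_mono)
  then have "vanishes_below (Suc (Suc 1)) (\<Theta> (fa_comm (f i) (f j)) - fa_comm (\<psi> (\<phi> (f i))) (\<psi> (\<phi> (f j))))"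
    by (intro Theta_comm_approx d f psi_vanishes_below_1)
  moreover have "vanishes_below (1 + 1) (fa_comm (\<psi> (\<phi> (f i))) (\<psi> (\<phi> (f j))))"
    by (intro vanishes_below_comm psi_vanishes_below_1)
  ultimately show ?thesis
    using Theta_comm_approx[OF d free_lie.bracket[OF f f] f] by (simp add: fields comm3_def numeral_eq_Suc)
qed

lemma Theta_comm4_approx:
  assumes d: "2 \<le> d" and f: "\<And>a. f a \<in> F"
  shows "vanishes_below 5
    (\<Theta> (fa_comm (comm3 f \<tau>) (f l)) - fa_comm (comm3 (\<lambda>a. \<psi> (\<phi> (f a))) \<tau>) (\<psi> (\<phi> (f l))))"
proof -
  obtain i j k where \<tau>: "\<tau> = (i, j, k)" by (cases \<tau>)
  have "vanishes_below (1 + 1 + 1) (comm3 (\<lambda>a. \<psi> (\<phi> (f a))) \<tau>)"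
    unfolding \<tau> comm3_def prod.case by (intro vanishes_below_comm psi_vanishes_below_1)
  moreover have "comm3 f \<tau> \<in> F"
    unfolding \<tau> comm3_def prod.case by (intro free_lie.bracket f)
  ultimately show ?thesis
    using Theta_comm_approx[OF d _ f] Theta_comm3_approx[OF d f, where \<tau> = \<tau>] by (simp add: numeral_eq_Suc)
qed

end

lemma (in vector_space) quot_dim_of_independent_mod:
  assumes I: "finite I" and N: "subspace N"
    and B: "b ` I \<subseteq> M" and spans: "M \<subseteq> span (b ` I \<union> N)"
    and indep: "\<And>c. (\<Sum>i\<in>I. scale (c i) (b i)) \<in> N \<Longrightarrow> \<forall>i\<in>I. c i = 0"
  shows "quot_dim scale M N (card I)"
proof -
  have inj: "inj_on b I"
  proof (rule inj_onI, rule ccontr)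
    fix i j assume i: "i \<in> I" and j: "j \<in> I" and eq: "b i = b j" and "i \<noteq> j"
    define c where "c k = (if k = i then 1 else if k = j then -1 else (0::'a))" for k
    have "(\<Sum>k\<in>I. scale (c k) (b k)) = (\<Sum>k\<in>I. (if k = i then b i else 0) - (if k = j then b j else 0))"
      using \<open>i \<noteq> j\<close> by (intro sum.cong) (auto simp: c_def)
    also have "\<dots> = 0" using I i j eq by (simp add: sum_subtractf)
    finally have "c i = 0" using indep i subspace_0[OF N] by metis
    then show False by (simp add: c_def)
  qed
  show ?thesis
    unfolding quot_dim_def
  proof (intro exI conjI allI impI)
    fix c assume "(\<Sum>v\<in>b ` I. scale (c v) v) \<in> N"
    then have "\<forall>i\<in>I. c (b i) = 0" by (intro indep) (simp add: sum.reindex[OF inj])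
    then show "\<forall>v\<in>b ` I. c v = 0" by auto
  qed (use I B spans card_image[OF inj] in auto)
qed

section \<open>Presentations of Heisenberg algebras\<close>

locale heisenberg_presentation = presentation +
  fixes m :: nat
  assumes heisenberg: "heisenberg scale br m"
begin

abbreviation "L2 \<equiv> lie_prod scale br UNIV UNIV"

lemma L2_center: "L2 = lie_center br"
  and dim_L2: "L.dim L2 = 1"
  and dim_L: "L.dim UNIV = 2 * m + 1"
  using heisenberg by (auto simp: heisenberg_def)

lemma br_in_L2: "br a b \<in> L2"
  unfolding lie_prod_def by (rule L.span_base) blast

lemma L2_singleton_basis: "\<exists>z. z \<noteq> 0 \<and> L2 = L.span {z}"
proof -
  obtain B where B: "B \<subseteq> L2" "L.independent B" "L2 \<subseteq> L.span B" "card B = L.dim L2"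
    by (rule L.basis_exists)
  then have "card B = 1" using dim_L2 by simp
  then obtain z where Bz: "B = {z}" by (rule card_1_singletonE)
  moreover have "L.span {z} \<subseteq> L2"
    using B(1) Bz unfolding lie_prod_def by (intro L.span_minimal) auto
  ultimately show ?thesis using B(2,3) by auto
qed

definition z where
  "z = (SOME z. z \<noteq> 0 \<and> L2 = L.span {z})"

lemma z_nonzero: "z \<noteq> 0" and L2_eq: "L2 = L.span {z}"
  using someI_ex[OF L2_singleton_basis] by (auto simp: z_def)

text \<open>The bracket of \<open>L\<close> is \<open>[a,b] = \<omega>(a,b) z\<close> for an alternating bilinear form \<open>\<omega>\<close>
  whose radical is \<open>span {z}\<close>.\<close>
definition \<omega> where
  "\<omega> a b = (SOME c. br a b = scale c z)"

lemma br_eq_omega: "br a b = scale (\<omega> a b) z"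
proof -
  have "\<exists>c. br a b = scale c z"
    using br_in_L2[of a b] L2_eq L.span_singleton by auto
  then show ?thesis unfolding \<omega>_def by (rule someI_ex)
qed

lemma omega_eqI: "br a b = scale c z \<Longrightarrow> \<omega> a b = c"
  using br_eq_omega[of a b] z_nonzero by simp

lemma omega_add_left: "\<omega> (x + y) w = \<omega> x w + \<omega> y w"
  by (rule omega_eqI) (unfold br_add_left, simp only: br_eq_omega L.scale_left_distrib)

lemma omega_add_right: "\<omega> w (x + y) = \<omega> w x + \<omega> w y"
  by (rule omega_eqI) (unfold br_add_right, simp only: br_eq_omega L.scale_left_distrib)

lemma omega_scale_left: "\<omega> (scale c x) w = c * \<omega> x w"
  by (rule omega_eqI) (unfold br_scale_left, simp only: br_eq_omega L.scale_scale)

lemma omega_scale_right: "\<omega> w (scale c x) = c * \<omega> w x"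
  by (rule omega_eqI) (unfold br_scale_right, simp only: br_eq_omega L.scale_scale)

lemma omega_self: "\<omega> x x = 0"
  by (rule omega_eqI) (simp add: br_self)

lemma omega_antisym: "\<omega> y x = - \<omega> x y"
  using omega_add_left[of x y "x + y"] omega_add_right[of x x y] omega_add_right[of y x y]
  by (simp add: omega_self eq_neg_iff_add_eq_0 add.commute)

lemma omega_diff_left: "\<omega> (x - y) w = \<omega> x w - \<omega> y w"
  and omega_diff_right: "\<omega> w (x - y) = \<omega> w x - \<omega> w y"
  using omega_add_left[of "x - y" y w] omega_add_right[of w "x - y" y] by simp_all

lemma omega_radical: "(\<forall>x. \<omega> c x = 0) \<longleftrightarrow> c \<in> L.span {z}"
  using L2_center L2_eq z_nonzero by (auto simp: lie_center_def br_eq_omega)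

lemma omega_z_left [simp]: "\<omega> z x = 0"
  using omega_radical L.span_base[of z "{z}"] by blast

lemma omega_z_right [simp]: "\<omega> x z = 0"
  using omega_z_left omega_antisym by (metis neg_equal_0_iff_equal)

lemma omega_nonzero: "\<exists>a b. \<omega> a b \<noteq> 0"
proof (rule ccontr)
  assume "\<not> ?thesis"
  then have "{br a b | a b. a \<in> UNIV \<and> b \<in> UNIV} \<subseteq> {0}" by (auto simp: br_eq_omega)
  then have "L2 \<subseteq> L.span {0}" unfolding lie_prod_def by (rule L.span_mono)
  then show False using L2_eq z_nonzero L.span_base[of z "{z}"] by auto
qed

definition B where
  "B = L.extend_basis {z}"

lemma B_independent: "L.independent B"
  and B_span: "L.span B = UNIV"
  and z_in_B: "z \<in> B"
proof -
  have "L.independent {z}" using z_nonzero by simp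
  then show "L.independent B" "L.span B = UNIV" "z \<in> B"
    using L.independent_extend_basis L.span_extend_basis L.extend_basis_superset[of "{z}"]
    by (auto simp: B_def)
qed

lemma card_B: "card B = 2 * m + 1"
  using L.dim_eq_card[of B UNIV] B_independent B_span dim_L by simp

lemma finite_B: "finite B"
  using card_B card.infinite by force

definition u where
  "u = (SOME u. bij_betw u {..<2*m} (B - {z}))"

lemma u_bij: "bij_betw u {..<2*m} (B - {z})"
proof -
  have "card (B - {z}) = 2 * m" using card_B finite_B z_in_B by simp
  then have "\<exists>h. bij_betw h {..<2*m} (B - {z})"
    using ex_bij_betw_nat_finite[of "B - {z}"] finite_B by (simp add: atLeast0LessThan)
  then show ?thesis unfolding u_def by (rule someI_ex)
qed

lemma u_in_B: "a < 2*m \<Longrightarrow> u a \<in> B"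
  and u_ne_z: "a < 2*m \<Longrightarrow> u a \<noteq> z"
  and u_eq_iff: "a < 2*m \<Longrightarrow> b < 2*m \<Longrightarrow> u a = u b \<longleftrightarrow> a = b"
  and B_eq: "B = insert z (u ` {..<2*m})"
  using u_bij z_in_B by (auto simp: bij_betw_def inj_on_eq_iff)

definition coord where
  "coord a l = L.representation B l (u a)"

definition zcoord where
  "zcoord l = L.representation B l z"

lemma coord_expansion: "l = (\<Sum>a<2*m. scale (coord a l) (u a)) + scale (zcoord l) z"
proof -
  have "l = (\<Sum>b\<in>B. scale (L.representation B l b) b)"
    using L.sum_representation_eq[OF B_independent _ finite_B] B_span by simp
  also have "\<dots> = scale (zcoord l) z + (\<Sum>b\<in>u ` {..<2*m}. scale (L.representation B l b) b)"
  proof -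
    define g where "g b = scale (L.representation B l b) b" for b
    have "z \<notin> u ` {..<2*m}" using u_ne_z by force
    then have "(\<Sum>b\<in>B. g b) = g z + (\<Sum>b\<in>u ` {..<2*m}. g b)"
      unfolding B_eq by (simp add: sum.insert)
    then show ?thesis by (simp add: g_def zcoord_def)
  qed
  also have "\<dots> = scale (zcoord l) z + (\<Sum>a<2*m. scale (coord a l) (u a))"
    by (simp add: sum.reindex[OF bij_betw_imp_inj_on[OF u_bij]] coord_def)
  finally show ?thesis by (simp add: add.commute)
qed

lemma coord_add: "coord a (x + y) = coord a x + coord a y"
  and zcoord_add: "zcoord (x + y) = zcoord x + zcoord y"
  and coord_scale: "coord a (scale c x) = c * coord a x"
  and zcoord_scale: "zcoord (scale c x) = c * zcoord x"
  using L.representation_add[OF B_independent] L.representation_scale[OF B_independent] B_span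
  by (simp_all add: coord_def zcoord_def)

lemma coord_u: "a < 2*m \<Longrightarrow> b < 2*m \<Longrightarrow> coord a (u b) = (if a = b then 1 else 0)"
  using L.representation_basis[OF B_independent u_in_B, of b] u_eq_iff by (simp add: coord_def)

lemma coord_z: "a < 2*m \<Longrightarrow> coord a z = 0"
  using L.representation_basis[OF B_independent z_in_B] u_ne_z by (simp add: coord_def)

lemma zcoord_u: "b < 2*m \<Longrightarrow> zcoord (u b) = 0"
  using L.representation_basis[OF B_independent u_in_B, of b] u_ne_z[of b] by (auto simp: zcoord_def)

lemma zcoord_z: "zcoord z = 1"
  using L.representation_basis[OF B_independent z_in_B] by (simp add: zcoord_def)

definition e where
  "e a = (SOME f. f \<in> F \<and> \<phi> f = u a)"

definition t where
  "t = (SOME f. f \<in> F \<and> \<phi> f = z)"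

lemma e_in_F: "e a \<in> F" and phi_e: "\<phi> (e a) = u a"
  using someI_ex[OF ex_lift[of "u a"]] by (auto simp: e_def)

lemma t_in_F: "t \<in> F" and phi_t: "\<phi> t = z"
  using someI_ex[OF ex_lift[of z]] by (auto simp: t_def)

lemma lift_decomposition:
  assumes f: "f \<in> F"
  shows "f - ((\<Sum>a<2*m. fa_scale (coord a (\<phi> f)) (e a)) + fa_scale (zcoord (\<phi> f)) t) \<in> R"
proof -
  have s: "(\<Sum>a<2*m. fa_scale (coord a (\<phi> f)) (e a)) \<in> F"
    by (intro free_lie_sum free_lie.smult e_in_F)
  have "\<phi> ((\<Sum>a<2*m. fa_scale (coord a (\<phi> f)) (e a)) + fa_scale (zcoord (\<phi> f)) t) = \<phi> f"
    using s coord_expansion[of "\<phi> f"]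
    by (simp add: phi_add phi_sum phi_scale e_in_F t_in_F phi_e phi_t free_lie.smult)
  then show ?thesis
    using f s t_in_F by (simp add: R_iff phi_diff free_lie_diff free_lie.add free_lie.smult)
qed

lemma F_span_mod_R:
  assumes "f \<in> F"
  shows "\<exists>v\<in>FA.span (insert t (e ` {..<2*m})). f - v \<in> R"
proof
  show "f - ((\<Sum>a<2*m. fa_scale (coord a (\<phi> f)) (e a)) + fa_scale (zcoord (\<phi> f)) t) \<in> R"
    by (rule lift_decomposition[OF assms])
  show "(\<Sum>a<2*m. fa_scale (coord a (\<phi> f)) (e a)) + fa_scale (zcoord (\<phi> f)) t
      \<in> FA.span (insert t (e ` {..<2*m}))"
    by (intro FA.span_add FA.span_sum FA.span_scale FA.span_base) auto
qed

lemma F2_subset: "LP F F \<subseteq> F"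
  by (rule LP_free_lie) auto

lemma phi_F2: "w \<in> LP F F \<Longrightarrow> \<phi> w \<in> L.span {z}"
proof -
  have "FA.subspace {w \<in> F. \<phi> w \<in> L.span {z}}"
    unfolding FA.subspace_def
    by (auto intro: free_lie.intros simp: phi_zero phi_add phi_scale L.span_zero L.span_add L.span_scale)
  then have "LP F F \<subseteq> {w \<in> F. \<phi> w \<in> L.span {z}}"
    by (rule LP_minimal) (use br_in_L2 L2_eq in \<open>auto intro: free_lie.bracket simp: phi_comm\<close>)
  then show "w \<in> LP F F \<Longrightarrow> \<phi> w \<in> L.span {z}" by auto
qed

lemma F3_subset_R: "LP (LP F F) F \<subseteq> R"
proof (rule LP_minimal[OF R_subspace])
  fix w c assume w: "w \<in> LP F F" and c: "c \<in> F"
  then have wc: "w \<in> F" "c \<in> F" using F2_subset by auto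
  have "\<omega> (\<phi> w) (\<phi> c) = 0" using phi_F2[OF w] omega_radical by blast
  then have "\<phi> (fa_comm w c) = 0" using wc by (simp add: phi_comm br_eq_omega)
  then show "fa_comm w c \<in> R" using wc by (simp add: R_iff free_lie.bracket)
qed

lemma mult2_num_eq: "mult2_num X \<phi> = LP (LP F F) F"
  using F3_subset_R by (auto simp: mult2_num_def)

lemma F3_comm_F3_in_N: "a \<in> LP (LP F F) F \<Longrightarrow> b \<in> LP (LP F F) F \<Longrightarrow> fa_comm a b \<in> N"
proof -
  assume a: "a \<in> LP (LP F F) F" and "b \<in> LP (LP F F) F"
  then have "b \<in> R" using F3_subset_R by auto
  then have "LP (LP F F) F \<subseteq> {a. fa_comm a b \<in> N}"
    using F2_subset by (intro LP_minimal subspace_comm_left_vimage LP_subspace) (auto intro: comm_F_F_R_in_N)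
  then show ?thesis using a by auto
qed

lemma mult2_iso_abelianI:
  assumes "finite I" "b ` I \<subseteq> LP (LP F F) F" "LP (LP F F) F \<subseteq> FA.span (b ` I \<union> N)"
    and "\<And>c. (\<Sum>i\<in>I. fa_scale (c i) (b i)) \<in> N \<Longrightarrow> \<forall>i\<in>I. c i = 0"
  shows "mult2_iso_abelian X \<phi> (card I)"
  unfolding quot_iso_abelian_def mult2_num_eq mult2_den_def
  using F3_comm_F3_in_N FA.quot_dim_of_independent_mod[OF _ LP_subspace] assms by blast

end

section \<open>The case \<open>m \<ge> 2\<close>\<close>

context heisenberg_presentation
begin

lemma m_le_1_if_spanned_by_3: "UNIV \<subseteq> L.span {a, b, c} \<Longrightarrow> m \<le> 1"
proof -
  assume "UNIV \<subseteq> L.span {a, b, c}"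
  then have "L.dim UNIV \<le> card {a, b, c}"
    by (rule L.dim_le_card) simp
  also have "\<dots> \<le> 3" by (simp add: card_insert_le_m1)
  finally show "m \<le> 1" using dim_L by simp
qed

lemma omega_pair_orthogonal:
  assumes m: "2 \<le> m"
  shows "\<exists>p q. \<omega> p y = 0 \<and> \<omega> q y = 0 \<and> \<omega> p q \<noteq> 0"
proof (cases "y \<in> L.span {z}")
  case True
  then show ?thesis using omega_nonzero omega_radical omega_antisym by (metis neg_equal_0_iff_equal)
next
  case False
  then obtain w0 where w0: "\<omega> y w0 \<noteq> 0" using omega_radical by blast
  define w where "w = scale (1 / \<omega> y w0) w0"
  have yw: "\<omega> y w = 1" using w0 by (simp add: w_def omega_scale_right)
  have wy: "\<omega> w y = -1" using yw omega_antisym[of w y] by simp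
  \<comment> \<open>\<open>P\<close> is the \<open>\<omega>\<close>-orthogonal projection onto the complement of \<open>span {y, w}\<close>.\<close>
  define P where "P a = a - scale (\<omega> a w) y + scale (\<omega> a y) w" for a
  have Py: "\<omega> (P a) y = 0" and Pw: "\<omega> (P a) w = 0" for a
    by (simp_all add: P_def omega_add_left omega_diff_left omega_scale_left omega_self yw wy)
  have P_dec: "x = P x + scale (\<omega> x w) y - scale (\<omega> x y) w" for x
    by (simp add: P_def)
  show ?thesis
  proof (rule ccontr)
    assume "\<not> ?thesis"
    then have PP: "\<omega> (P a) (P b) = 0" for a b using Py by blast
    have "\<omega> (P a) x = 0" for a x
    proof -
      have "\<omega> (P a) x = \<omega> (P a) (P x + scale (\<omega> x w) y - scale (\<omega> x y) w)"
        using P_dec[of x] by simp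
      also have "\<dots> = 0"
        by (simp add: omega_add_right omega_diff_right omega_scale_right PP Py Pw)
      finally show ?thesis .
    qed
    then have "P a \<in> L.span {z, y, w}" for a
      using omega_radical L.span_mono[of "{z}" "{z, y, w}"] by blast
    moreover have "y \<in> L.span {z, y, w}" "w \<in> L.span {z, y, w}"
      by (auto intro: L.span_base)
    ultimately have "P a + scale (\<omega> a w) y - scale (\<omega> a y) w \<in> L.span {z, y, w}" for a
      by (intro L.span_diff L.span_add L.span_scale)
    then have "UNIV \<subseteq> L.span {z, y, w}"
      using P_dec by auto
    then show False using m_le_1_if_spanned_by_3 m by fastforce
  qed
qed

text \<open>Writing \<open>z = [p,q]\<close> with \<open>p, q\<close> orthogonal to \<open>u\<^sub>k\<close>, Jacobi shows \<open>[t, e\<^sub>k] \<in> [R,F]\<close>.\<close>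
lemma comm_t_e_in_K:
  assumes m: "2 \<le> m"
  shows "fa_comm t (e k) \<in> K"
proof -
  obtain p q where pq: "\<omega> p (u k) = 0" "\<omega> q (u k) = 0" "\<omega> p q \<noteq> 0"
    using omega_pair_orthogonal[OF m] by blast
  obtain p' where p': "p' \<in> F" "\<phi> p' = scale (1 / \<omega> p q) p" using ex_lift by blast
  obtain q' where q': "q' \<in> F" "\<phi> q' = q" using ex_lift by blast
  have "t - fa_comm p' q' \<in> R"
    using p' q' pq t_in_F
    by (simp add: R_iff free_lie_diff free_lie.bracket phi_diff phi_comm phi_t br_eq_omega omega_scale_left)
  then have "fa_comm (t - fa_comm p' q') (e k) \<in> K"
    using e_in_F by (rule comm_R_F_in_K)
  moreover have "fa_comm p' (e k) \<in> R" "fa_comm q' (e k) \<in> R"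
    using p' q' pq e_in_F
    by (simp_all add: R_iff free_lie.bracket phi_comm phi_e br_eq_omega omega_scale_left)
  then have "fa_comm (fa_comm p' (e k)) q' \<in> K" "fa_comm p' (fa_comm q' (e k)) \<in> K"
    using p' q' by (simp_all add: comm_R_F_in_K comm_F_R_in_K)
  moreover have "fa_comm t (e k) = fa_comm (t - fa_comm p' q') (e k) +
      (fa_comm (fa_comm p' (e k)) q' + fa_comm p' (fa_comm q' (e k)))"
    by (simp add: fa_comm_diff_left fa_jacobi[of p' q' "e k"])
  ultimately show ?thesis
    using FA.subspace_add[OF LP_subspace] by metis
qed

end

text \<open>The triples \<open>(i, j, k)\<close> with \<open>i < j < n\<close> and \<open>k \<le> j\<close> index the basic commutators
  \<open>[[x\<^sub>i, x\<^sub>j], x\<^sub>k]\<close>, a basis of the degree-3 part of the free Lie algebra on \<open>n\<close> generators;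
  \<open>hall_word\<close> picks a word on which exactly one of them has a nonzero coefficient.\<close>
definition hall_triples :: "nat \<Rightarrow> (nat \<times> nat \<times> nat) set" where
  "hall_triples n = {(i, j, k). i < j \<and> j < n \<and> k \<le> j}"

definition hall_word :: "nat \<times> nat \<times> nat \<Rightarrow> nat list" where
  "hall_word = (\<lambda>(i, j, k). if k = j then [i, j, j] else [j, i, k])"

lemma finite_hall_triples: "finite (hall_triples n)"
  by (rule finite_subset[of _ "{..<n} \<times> {..<n} \<times> {..<n}"]) (auto simp: hall_triples_def)

lemma card_hall_triples: "card (hall_triples n) * 3 + n = n ^ 3"
proof (induction n)
  case 0
  have "hall_triples 0 = {}" by (simp add: hall_triples_def)
  then show ?case by simp
next
  case (Suc n)
  have new: "hall_triples (Suc n) = hall_triples n \<union> (\<lambda>(i, k). (i, n, k)) ` ({..<n} \<times> {..n})"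
    by (auto simp: hall_triples_def less_Suc_eq)
  have "inj_on (\<lambda>(i, k). (i, n, k)) ({..<n} \<times> {..n})"
    by (auto simp: inj_on_def)
  moreover have "hall_triples n \<inter> (\<lambda>(i, k). (i, n, k)) ` ({..<n} \<times> {..n}) = {}"
    by (auto simp: hall_triples_def)
  ultimately have "card (hall_triples (Suc n)) = card (hall_triples n) + n * (n + 1)"
    unfolding new using finite_hall_triples
    by (subst card_Un_disjoint) (auto simp: card_image card_cartesian_product)
  then show ?case using Suc by (simp add: power3_eq_cube algebra_simps)
qed

lemma comm3_fa_gen_eq:
  "comm3 fa_gen (i, j, k) = fa_word [i,j,k] - fa_word [j,i,k] - fa_word [k,i,j] + fa_word [k,j,i]"
  by (simp add: comm3_def fa_comm_def fa_gen_eq_fa_word fa_mul_diff_left fa_mul_diff_right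
      fa_word_mul)

lemma comm3_fa_gen_hall_word:
  assumes "(i, j, k) \<in> hall_triples n" and "(i', j', k') \<in> hall_triples n"
  shows "comm3 fa_gen (i, j, k) (hall_word (i', j', k')) =
    (if (i, j, k) = (i', j', k') then if k' = j' then 1 else -1 else (0::'k::field))"
  using assms by (auto simp: comm3_fa_gen_eq hall_triples_def hall_word_def fa_word_def)

context heisenberg_presentation
begin

lemma comm3_e_in_F3: "comm3 e \<tau> \<in> LP (LP F F) F"
  by (cases \<tau>) (auto simp: comm3_def intro!: LP_base e_in_F)

lemma comm3_e_in_span_hall_triples:
  assumes "i < 2*m" "j < 2*m" "k < 2*m"
  shows "comm3 e (i, j, k) \<in> FA.span (comm3 e ` hall_triples (2*m))"
proof -
  have ordered: "comm3 e (i, j, k) \<in> FA.span (comm3 e ` hall_triples (2*m))"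
    if "i < j" "j < 2*m" "k < 2*m" for i j k
  proof (cases "k \<le> j")
    case True
    then show ?thesis using that by (intro FA.span_base) (auto simp: hall_triples_def)
  next
    case False
    have "comm3 e (i, j, k) = comm3 e (i, k, j) - comm3 e (j, k, i)"
      unfolding comm3_def
      by (simp add: fa_jacobi[of "e i" "e j" "e k"] fa_comm_antisym[of "e i" "fa_comm (e j) (e k)"])
    moreover have "(i, k, j) \<in> hall_triples (2*m)" "(j, k, i) \<in> hall_triples (2*m)"
      using that False by (auto simp: hall_triples_def)
    ultimately show ?thesis by (simp add: FA.span_diff FA.span_base)
  qed
  consider "i < j" | "i = j" | "j < i" by arith
  then show ?thesis
  proof cases
    case 2
    then show ?thesis by (simp add: comm3_def FA.span_zero)
  next
    case 3
    have "comm3 e (i, j, k) = - comm3 e (j, i, k)"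
      unfolding comm3_def by (simp add: fa_comm_antisym[of "e i" "e j"] fa_comm_minus_left)
    then show ?thesis using ordered[OF 3] assms by (simp add: FA.span_neg)
  qed (use ordered assms in blast)
qed

lemma comm3_involving_t_in_N:
  assumes m: "2 \<le> m" and pqs: "p \<in> insert t (range e)" "q \<in> insert t (range e)" "s \<in> insert t (range e)"
    and t: "t \<in> {p, q, s}"
  shows "fa_comm (fa_comm p q) s \<in> N"
proof -
  have F: "v \<in> F" if "v \<in> insert t (range e)" for v
    using that t_in_F e_in_F by auto
  have tK: "fa_comm t v \<in> K" if "v \<in> insert t (range e)" for v
    using that comm_t_e_in_K[OF m] FA.subspace_0[OF LP_subspace] by auto
  have Kt: "fa_comm v t \<in> K" if "v \<in> insert t (range e)" for v
    using FA.subspace_neg[OF LP_subspace tK[OF that]] by (simp add: fa_comm_antisym[of v t])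
  from t consider "p = t" | "q = t" | "s = t" by auto
  then show ?thesis
  proof cases
    case 1
    show ?thesis unfolding 1 using pqs F by (intro comm_K_F_in_N tK) auto
  next
    case 2
    show ?thesis unfolding 2 using pqs F by (intro comm_K_F_in_N Kt) auto
  next
    case 3
    have "fa_comm (fa_comm p t) q \<in> N" using pqs F by (intro comm_K_F_in_N Kt) auto
    moreover have "fa_comm p (fa_comm q t) \<in> N" using pqs F by (intro comm_F_K_in_N Kt) auto
    ultimately show ?thesis
      unfolding 3 fa_jacobi[of p q t] by (rule FA.subspace_add[OF LP_subspace])
  qed
qed

lemma F3_subset_span_hall_triples:
  assumes m: "2 \<le> m"
  shows "LP (LP F F) F \<subseteq> FA.span (comm3 e ` hall_triples (2*m) \<union> N)"
proof (rule F3_subset_by_generators_mod_R[OF _ F_span_mod_R])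
  let ?S = "FA.span (comm3 e ` hall_triples (2*m) \<union> N)"
  show "insert t (e ` {..<2*m}) \<subseteq> F" using t_in_F e_in_F by auto
  show "FA.subspace ?S" by (rule FA.subspace_span)
  show N_S: "N \<subseteq> ?S" by (rule order_trans[OF _ FA.span_superset]) auto
  fix p q s assume pqs: "p \<in> insert t (e ` {..<2*m})" "q \<in> insert t (e ` {..<2*m})"
    "s \<in> insert t (e ` {..<2*m})"
  show "fa_comm (fa_comm p q) s \<in> ?S"
  proof (cases "t \<in> {p, q, s}")
    case True
    then show ?thesis using comm3_involving_t_in_N[OF m _ _ _ True] pqs N_S by blast
  next
    case False
    then obtain i j k where ijk: "p = e i" "q = e j" "s = e k" "i < 2*m" "j < 2*m" "k < 2*m"
      using pqs by auto
    then have "comm3 e (i, j, k) \<in> FA.span (comm3 e ` hall_triples (2*m))"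
      by (intro comm3_e_in_span_hall_triples)
    then have "comm3 e (i, j, k) \<in> ?S"
      using FA.span_mono[of "comm3 e ` hall_triples (2*m)"] by blast
    then show ?thesis using ijk by (simp add: comm3_def)
  qed
qed

text \<open>Dropping the central coordinate, \<open>u\<^sub>a \<mapsto> x\<^sub>a\<close> and \<open>z \<mapsto> 0\<close>, is compatible with brackets
  below degree 2, since all brackets of \<open>L\<close> are central.\<close>
definition psi2 where
  "psi2 l = (\<Sum>a<2*m. fa_scale (coord a l) (fa_gen a))"

lemma psi2_u: "b < 2*m \<Longrightarrow> psi2 (u b) = fa_gen b"
proof -
  assume b: "b < 2*m"
  have "psi2 (u b) = (\<Sum>a<2*m. if a = b then fa_gen a else 0)"
    unfolding psi2_def by (rule sum.cong) (auto simp: coord_u b fun_eq_iff)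
  then show ?thesis using b by simp
qed

sublocale deg2: presentation_lift scale br X \<phi> psi2 2
proof
  show "psi2 (x + y) = psi2 x + psi2 y" for x y
    by (simp add: psi2_def coord_add FA.scale_left_distrib sum.distrib)
  show "psi2 (scale c x) = fa_scale c (psi2 x)" for c x
    by (simp add: psi2_def coord_scale FA.scale_sum_right)
  show "vanishes_below 1 (psi2 x)" for x
    unfolding psi2_def by (intro vanishes_below_sum vanishes_below_scale vanishes_below_fa_gen)
  show "vanishes_below 2 (fa_comm p q - psi2 (br x y))"
    if "vanishes_below 1 p" "vanishes_below 1 q" for p q x y
  proof -
    have "psi2 (br x y) = 0"
      by (simp add: psi2_def br_eq_omega coord_scale coord_z fun_eq_iff)
    then show ?thesis using vanishes_below_comm[OF that] by (simp add: numeral_2_eq_2)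
  qed
qed

lemma Theta_comm3_e:
  assumes "i < 2*m" "j < 2*m" "k < 2*m" "length w = 3"
  shows "deg2.\<Theta> (comm3 e (i, j, k)) w = comm3 fa_gen (i, j, k) w"
proof -
  have "comm3 (\<lambda>a. psi2 (\<phi> (e a))) (i, j, k) = comm3 fa_gen (i, j, k)"
    using assms by (simp add: comm3_def phi_e psi2_u)
  then show ?thesis
    using deg2.Theta_comm3_approx[OF _ e_in_F, where \<tau> = "(i, j, k)"] assms by (simp add: vanishes_below_def)
qed

lemma comm3_e_independent_mod_N:
  assumes c: "(\<Sum>\<tau>\<in>hall_triples (2*m). fa_scale (c \<tau>) (comm3 e \<tau>)) \<in> N"
  shows "\<forall>\<tau>\<in>hall_triples (2*m). c \<tau> = 0"
proof
  fix \<tau> assume \<tau>: "\<tau> \<in> hall_triples (2*m)"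
  obtain i' j' k' where \<tau>_eq: "\<tau> = (i', j', k')" by (cases \<tau>)
  have "length (hall_word \<tau>) < 4" by (simp add: \<tau>_eq hall_word_def)
  then have "0 = deg2.\<Theta> (\<Sum>\<sigma>\<in>hall_triples (2*m). fa_scale (c \<sigma>) (comm3 e \<sigma>)) (hall_word \<tau>)"
    using deg2.Theta_N[OF c] by (simp add: vanishes_below_def)
  also have "\<dots> = (\<Sum>\<sigma>\<in>hall_triples (2*m). c \<sigma> * deg2.\<Theta> (comm3 e \<sigma>) (hall_word \<tau>))"
  proof -
    have "fsupp (comm3 e \<sigma>)" for \<sigma>
      by (cases \<sigma>) (auto simp: comm3_def intro!: free_lie_fsupp free_lie.bracket e_in_F)
    then show ?thesis by (simp add: fa_subst_sum fa_subst_scale fsupp_scale sum_fun_apply)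
  qed
  also have "\<dots> = (\<Sum>\<sigma>\<in>hall_triples (2*m). c \<sigma> * (if \<sigma> = \<tau> then if k' = j' then 1 else -1 else 0))"
  proof (intro sum.cong refl)
    fix \<sigma> assume \<sigma>: "\<sigma> \<in> hall_triples (2*m)"
    obtain i j k where \<sigma>_eq: "\<sigma> = (i, j, k)" by (cases \<sigma>)
    have "deg2.\<Theta> (comm3 e \<sigma>) (hall_word \<tau>) = comm3 fa_gen (i, j, k) (hall_word \<tau>)"
      using \<sigma> \<tau> by (auto simp: \<sigma>_eq \<tau>_eq Theta_comm3_e hall_triples_def hall_word_def)
    also have "\<dots> = (if \<sigma> = \<tau> then if k' = j' then 1 else -1 else 0)"
      using comm3_fa_gen_hall_word[of i j k "2*m" i' j' k'] \<sigma> \<tau> by (simp add: \<sigma>_eq \<tau>_eq)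
    finally show "c \<sigma> * deg2.\<Theta> (comm3 e \<sigma>) (hall_word \<tau>) =
        c \<sigma> * (if \<sigma> = \<tau> then if k' = j' then 1 else -1 else 0)" by simp
  qed
  also have "\<dots> = c \<tau> * (if k' = j' then 1 else -1)"
    using \<tau> finite_hall_triples by (simp add: if_distrib[of "\<lambda>x. c _ * x"] cong: if_cong)
  finally show "c \<tau> = 0" by (auto split: if_splits)
qed

lemma mult2_iso_abelian_ge_2:
  assumes "2 \<le> m"
  shows "mult2_iso_abelian X \<phi> ((8 * m ^ 3 - 2 * m) div 3)"
proof -
  have "card (hall_triples (2*m)) * 3 + 2 * m = 8 * m ^ 3"
    using card_hall_triples[of "2*m"] by simp
  then have "card (hall_triples (2*m)) = (8 * m ^ 3 - 2 * m) div 3" by simp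
  then show ?thesis
    using mult2_iso_abelianI[OF finite_hall_triples _ F3_subset_span_hall_triples[OF assms]]
      comm3_e_in_F3 comm3_e_independent_mod_N by fastforce
qed

end

section \<open>The case \<open>m = 1\<close>\<close>

definition basis_H1 :: "(nat \<Rightarrow> 'x list \<Rightarrow> 'k::field) \<Rightarrow> ('x list \<Rightarrow> 'k) list" where
  "basis_H1 f = [comm3 f (1, 0, 0), comm3 f (1, 0, 1), fa_comm (comm3 f (1, 0, 0)) (f 0),
     fa_comm (comm3 f (1, 0, 0)) (f 1), fa_comm (comm3 f (1, 0, 1)) (f 1)]"

lemma basis_H1_fa_gen_values:
  "(basis_H1 fa_gen ! 0) [1,0,0] = (1::'k::field)" "(basis_H1 fa_gen ! 1) [1,0,0] = (0::'k)"
  "(basis_H1 fa_gen ! 0) [0,1,1] = (0::'k)" "(basis_H1 fa_gen ! 1) [0,1,1] = (-1::'k)"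
  "(basis_H1 fa_gen ! 2) [1,0,0,0] = (1::'k)" "(basis_H1 fa_gen ! 3) [1,0,0,0] = (0::'k)"
  "(basis_H1 fa_gen ! 4) [1,0,0,0] = (0::'k)" "(basis_H1 fa_gen ! 3) [0,0,1,1] = (1::'k)"
  "(basis_H1 fa_gen ! 4) [0,0,1,1] = (0::'k)" "(basis_H1 fa_gen ! 4) [1,1,1,0] = (1::'k)"
  unfolding basis_H1_def comm3_def prod.case fa_comm_def fa_gen_eq_fa_word fa_mul_diff_left
    fa_mul_diff_right fa_word_mul
  by (simp_all add: fa_word_def)

lemma basis_H1_fa_gen_low_degree:
  assumes "2 \<le> i" "i < 5" "length w < 4"
  shows "(basis_H1 fa_gen ! i) w = (0::'k::field)"
proof -
  have "vanishes_below (1 + 1 + 1 + 1) (fa_comm (comm3 fa_gen (1, 0, k)) (fa_gen l) :: nat list \<Rightarrow> 'k)"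
    for k l :: nat
    unfolding comm3_def prod.case by (intro vanishes_below_comm vanishes_below_fa_gen)
  moreover have "i = 2 \<or> i = 3 \<or> i = 4" using assms by arith
  ultimately show ?thesis using assms(3) by (auto simp: basis_H1_def vanishes_below_def)
qed

locale heisenberg1_presentation = heisenberg_presentation +
  assumes m_eq_1: "m = 1"
begin

lemma coord_expansion_H1: "l = scale (coord 0 l) (u 0) + scale (coord 1 l) (u 1) + scale (zcoord l) z"
  using coord_expansion[of l] m_eq_1 by (simp add: numeral_2_eq_2)

lemma omega_eq_det: "\<omega> x y = (coord 0 x * coord 1 y - coord 1 x * coord 0 y) * \<omega> (u 0) (u 1)"
proof -
  have "\<omega> x y = \<omega> (scale (coord 0 x) (u 0) + scale (coord 1 x) (u 1) + scale (zcoord x) z)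
                  (scale (coord 0 y) (u 0) + scale (coord 1 y) (u 1) + scale (zcoord y) z)"
    using coord_expansion_H1 by metis
  also have "\<dots> = (coord 0 x * coord 1 y - coord 1 x * coord 0 y) * \<omega> (u 0) (u 1)"
    by (simp only: omega_add_left omega_add_right omega_scale_left omega_scale_right
        omega_self omega_z_left omega_z_right omega_antisym[of "u 1" "u 0"]) (simp add: algebra_simps)
  finally show ?thesis .
qed

lemma omega_u0_u1: "\<omega> (u 0) (u 1) \<noteq> 0"
proof
  assume "\<omega> (u 0) (u 1) = 0"
  moreover obtain a b where "\<omega> a b \<noteq> 0" using omega_nonzero by blast
  ultimately show False using omega_eq_det[of a b] by simp
qed

definition T where
  "T = fa_comm (e 1) (e 0)"

lemma T_in_F: "T \<in> F"
  by (simp add: T_def free_lie.bracket e_in_F)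

lemma t_eq_T_mod_R: "t - fa_scale (1 / \<omega> (u 1) (u 0)) T \<in> R"
proof -
  have "\<omega> (u 1) (u 0) \<noteq> 0" using omega_u0_u1 omega_antisym[of "u 1" "u 0"] by simp
  then show ?thesis
    using t_in_F T_in_F
    by (simp add: R_iff free_lie_diff free_lie.smult phi_diff phi_scale phi_t T_def phi_comm e_in_F
        phi_e br_eq_omega)
qed

lemma F_span_mod_R_H1:
  assumes f: "f \<in> F"
  shows "\<exists>v\<in>FA.span {e 0, e 1, T}. f - v \<in> R"
proof -
  define A where "A = (\<Sum>a<2*m. fa_scale (coord a (\<phi> f)) (e a))"
  define c where "c = zcoord (\<phi> f)"
  define \<kappa> where "\<kappa> = \<omega> (u 1) (u 0)"
  have "(f - (A + fa_scale c t)) + fa_scale c (t - fa_scale (1 / \<kappa>) T) \<in> R"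
    using lift_decomposition[OF f] t_eq_T_mod_R FA.subspace_add[OF R_subspace]
      FA.subspace_scale[OF R_subspace] by (simp add: A_def c_def \<kappa>_def)
  moreover have "(f - (A + fa_scale c t)) + fa_scale c (t - fa_scale (1 / \<kappa>) T) =
      f - (A + fa_scale (c / \<kappa>) T)"
    by (simp add: fun_eq_iff algebra_simps)
  ultimately have "f - (A + fa_scale (c / \<kappa>) T) \<in> R" by simp
  moreover have "A + fa_scale (c / \<kappa>) T \<in> FA.span {e 0, e 1, T}"
    unfolding A_def using m_eq_1
    by (intro FA.span_add FA.span_sum FA.span_scale FA.span_base) (auto simp: numeral_2_eq_2 less_Suc_eq)
  ultimately show ?thesis by blast
qed

lemma F3_subset_span_basis_H1: "LP (LP F F) F \<subseteq> FA.span (set (basis_H1 e) \<union> N)"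
proof (rule F3_subset_by_generators_mod_R[where V = "{e 0, e 1, T}"])
  let ?S = "FA.span (set (basis_H1 e) \<union> N)"
  show "{e 0, e 1, T} \<subseteq> F" using e_in_F T_in_F by auto
  show "FA.subspace ?S" by (rule FA.subspace_span)
  show "N \<subseteq> ?S" by (rule order_trans[OF _ FA.span_superset]) auto
  show "\<exists>v\<in>FA.span {e 0, e 1, T}. f - v \<in> R" if "f \<in> F" for f
    using F_span_mod_R_H1[OF that] .
  have N_S: "x \<in> N \<Longrightarrow> x \<in> ?S" for x by (rule FA.span_base) auto
  have basis_S: "fa_comm T (e 0) \<in> ?S" "fa_comm T (e 1) \<in> ?S"
    "fa_comm (fa_comm T (e 0)) (e 0) \<in> ?S" "fa_comm (fa_comm T (e 0)) (e 1) \<in> ?S"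
    "fa_comm (fa_comm T (e 1)) (e 1) \<in> ?S"
    by (auto intro: FA.span_base simp: basis_H1_def comm3_def T_def)
  have T_S: "fa_comm T s \<in> ?S" if "s \<in> {e 0, e 1, T}" for s
    using that basis_S FA.span_zero by auto
  have TeT_N: "fa_comm (fa_comm T (e i)) T \<in> N" for i
  proof -
    have "fa_comm T (e i) \<in> R" using F3_subset_R T_def by (auto intro!: LP_base e_in_F)
    then have "fa_comm T (fa_comm T (e i)) \<in> N"
      using comm_F_F_R_in_N[of "fa_comm T (e i)" "e 1" "e 0"] e_in_F by (simp add: T_def)
    then show ?thesis
      using FA.subspace_neg[OF LP_subspace] fa_comm_antisym[of "fa_comm T (e i)" T] by metis
  qed
  have TeS: "fa_comm (fa_comm T q) s \<in> ?S" if "q \<in> {e 0, e 1, T}" "s \<in> {e 0, e 1, T}" for q s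
  proof -
    have "fa_comm (fa_comm T (e 1)) (e 0) = fa_comm (fa_comm T (e 0)) (e 1)"
      using fa_jacobi[of T "e 1" "e 0"] by (simp add: T_def)
    then show ?thesis
      using that basis_S N_S[OF TeT_N] FA.span_zero by auto
  qed
  fix p q s assume p: "p \<in> {e 0, e 1, T}" and q: "q \<in> {e 0, e 1, T}" and s: "s \<in> {e 0, e 1, T}"
  have "fa_comm (fa_comm (e 0) (e 1)) s = - fa_comm T s"
    by (simp only: T_def fa_comm_antisym[of "e 0" "e 1"] fa_comm_minus_left)
  moreover have "fa_comm (fa_comm p T) s = - fa_comm (fa_comm T p) s"
    by (simp add: fa_comm_antisym[of p T] fa_comm_minus_left)
  ultimately show "fa_comm (fa_comm p q) s \<in> ?S"
    using p q T_S[OF s] TeS[OF p s] TeS[OF q s] FA.span_neg FA.span_zero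
    by (auto simp: T_def)
qed

text \<open>For \<open>H(1)\<close> the central coordinate is kept as well, as a multiple of \<open>[x\<^sub>0, x\<^sub>1]\<close>; this
  makes the map compatible with brackets below degree 3.\<close>
definition psi3 where
  "psi3 l = fa_scale (coord 0 l) (fa_gen (0::nat)) + fa_scale (coord 1 l) (fa_gen 1)
     + fa_scale (zcoord l / \<omega> (u 0) (u 1)) (fa_comm (fa_gen 0) (fa_gen 1))"

lemma psi3_Nil: "psi3 l [] = 0"
  and psi3_singleton: "psi3 l [a] = coord 0 l * (if a = 0 then 1 else 0) + coord 1 l * (if a = 1 then 1 else 0)"
  by (simp_all add: psi3_def fa_comm_fa_gen) (simp_all add: fa_gen_def fa_word_def)

lemma psi3_u:
  assumes a: "a < 2"
  shows "psi3 (u a) = fa_gen a"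
proof -
  have "a < 2*m" "0 < 2*m" "1 < 2*m" using a m_eq_1 by auto
  then have "coord 0 (u a) = (if a = 0 then 1 else 0)" "coord 1 (u a) = (if a = 1 then 1 else 0)"
    "zcoord (u a) = 0"
    using coord_u zcoord_u by auto
  then show ?thesis using a by (auto simp: psi3_def fun_eq_iff less_2_cases_iff)
qed

lemma psi3_br:
  "psi3 (br x y) = fa_scale (coord 0 x * coord 1 y - coord 1 x * coord 0 y) (fa_comm (fa_gen 0) (fa_gen 1))"
proof -
  have "coord 0 z = 0" "coord 1 z = 0" using coord_z m_eq_1 by auto
  then have "psi3 (br x y) = fa_scale (\<omega> x y / \<omega> (u 0) (u 1)) (fa_comm (fa_gen 0) (fa_gen 1))"
    by (simp add: psi3_def br_eq_omega coord_scale zcoord_scale zcoord_z fun_eq_iff)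
  then show ?thesis using omega_u0_u1 omega_eq_det[of x y] by simp
qed

lemma psi3_br_approx:
  assumes p: "vanishes_below 1 p" "vanishes_below 3 (p - psi3 x)"
    and q: "vanishes_below 1 q" "vanishes_below 3 (q - psi3 y)"
  shows "vanishes_below 3 (fa_comm p q - psi3 (br x y))"
  unfolding vanishes_below_def
proof (intro allI impI)
  fix w :: "nat list" assume w: "length w < 3"
  show "(fa_comm p q - psi3 (br x y)) w = 0"
  proof (cases "length w < 2")
    case True
    have "fa_comm p q w = 0"
      using vanishes_below_comm[OF p(1) q(1)] True by (simp add: vanishes_below_def numeral_2_eq_2)
    moreover have "psi3 (br x y) w = 0"
      using True by (auto simp: psi3_br fa_comm_fa_gen fa_word_def)
    ultimately show ?thesis by simp
  next
    case False
    then have "length w = Suc (Suc 0)" using w by simp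
    then obtain a b where w_eq: "w = [a, b]"
      by (auto simp: length_Suc_conv)
    have "p [] = 0" "q [] = 0" using p(1) q(1) by (auto simp: vanishes_below_def)
    moreover have "p [c] = psi3 x [c]" "q [c] = psi3 y [c]" for c
      using p(2) q(2) by (auto simp: vanishes_below_def)
    ultimately have "fa_comm p q w = psi3 x [a] * psi3 y [b] - psi3 y [a] * psi3 x [b]"
      by (simp add: w_eq fa_comm_length_2)
    moreover have "psi3 (br x y) w = (coord 0 x * coord 1 y - coord 1 x * coord 0 y) *
        ((if a = 0 \<and> b = 1 then 1 else 0) - (if a = 1 \<and> b = 0 then 1 else 0))"
      by (simp add: w_eq psi3_br fa_comm_fa_gen fa_word_def)
    ultimately show ?thesis
      by (auto simp: psi3_singleton mult.commute)
  qed
qed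

sublocale deg3: presentation_lift scale br X \<phi> psi3 3
proof
  show "psi3 (x + y) = psi3 x + psi3 y" for x y
    by (simp add: psi3_def coord_add zcoord_add add_divide_distrib FA.scale_left_distrib ac_simps)
  show "psi3 (scale c x) = fa_scale c (psi3 x)" for c x
    by (simp add: psi3_def coord_scale zcoord_scale FA.scale_right_distrib FA.scale_scale)
  show "vanishes_below 1 (psi3 x)" for x
    by (simp add: vanishes_below_def psi3_Nil)
qed (rule psi3_br_approx)

lemma basis_H1_e_in_F3: "b \<in> set (basis_H1 e) \<Longrightarrow> b \<in> LP (LP F F) F"
  unfolding basis_H1_def comm3_def by (auto intro!: LP_base free_lie.bracket e_in_F)

lemma Theta_basis_H1:
  assumes i: "i < 5" and w: "length w = 3 \<or> 2 \<le> i \<and> length w = 4"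
  shows "deg3.\<Theta> (basis_H1 e ! i) w = (basis_H1 fa_gen ! i) w"
proof -
  have gen: "comm3 (\<lambda>a. psi3 (\<phi> (e a))) (1, 0, k) = comm3 fa_gen (1, 0, k)"
    "psi3 (\<phi> (e k)) = fa_gen k" if "k < 2" for k
    using that psi3_u by (simp_all add: comm3_def phi_e)
  have deg3: "vanishes_below 4 (deg3.\<Theta> (comm3 e (1, 0, k)) - comm3 fa_gen (1, 0, k))"
    if "k < 2" for k
    using deg3.Theta_comm3_approx[where f = e and \<tau> = "(1, 0, k)"] e_in_F gen that by simp
  have deg4: "vanishes_below 5 (deg3.\<Theta> (fa_comm (comm3 e (1, 0, k)) (e l)) -
      fa_comm (comm3 fa_gen (1, 0, k)) (fa_gen l))" if "k < 2" "l < 2" for k l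
    using deg3.Theta_comm4_approx[where f = e and \<tau> = "(1, 0, k)" and l = l] e_in_F gen that by simp
  have "i = 0 \<or> i = 1 \<or> i = 2 \<or> i = 3 \<or> i = 4" using i by arith
  then show ?thesis
    using w deg3[of 0] deg3[of 1] deg4[of 0 0] deg4[of 0 1] deg4[of 1 1]
    by (auto simp: basis_H1_def vanishes_below_def)
qed

lemma basis_H1_e_independent_mod_N:
  assumes c: "(\<Sum>i<5. fa_scale (c i) (basis_H1 e ! i)) \<in> N"
  shows "\<forall>i<5. c i = 0"
proof -
  define v where "v i w = deg3.\<Theta> (basis_H1 e ! i) w" for i w
  have fsupp_basis_H1: "fsupp (basis_H1 e ! i)" if "i < 5" for i
  proof -
    have "length (basis_H1 e) = 5" by (simp add: basis_H1_def)
    then have "basis_H1 e ! i \<in> set (basis_H1 e)" using that by simp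
    then show ?thesis using basis_H1_e_in_F3 F3_subset_R R_subset free_lie_fsupp by blast
  qed
  have "deg3.\<Theta> (\<Sum>i<5. fa_scale (c i) (basis_H1 e ! i)) =
      (\<Sum>i<5. deg3.\<Theta> (fa_scale (c i) (basis_H1 e ! i)))"
    using fsupp_basis_H1 by (intro fa_subst_sum fsupp_scale) simp
  then have "deg3.\<Theta> (\<Sum>i<5. fa_scale (c i) (basis_H1 e ! i)) =
      (\<Sum>i<5. fa_scale (c i) (deg3.\<Theta> (basis_H1 e ! i)))"
    by (simp only: fa_subst_scale)
  then have eq: "c 0 * v 0 w + c 1 * v 1 w + c 2 * v 2 w + c 3 * v 3 w + c 4 * v 4 w = 0"
    if "length w < 5" for w
    using deg3.Theta_N[OF c] that
    by (simp add: vanishes_below_def v_def sum_fun_apply numeral_eq_Suc lessThan_Suc add.commute)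
  have v: "v i w = (basis_H1 fa_gen ! i) w" if "i < 5" "length w = 3 \<or> 2 \<le> i \<and> length w = 4" for i w
    using Theta_basis_H1[OF that] by (simp add: v_def)
  have v3: "v i w = 0" if "2 \<le> i" "i < 5" "length w = 3" for i w
    using v[of i w] that by (simp add: basis_H1_fa_gen_low_degree)
  have v_values: "v 0 [1,0,0] = 1" "v 1 [1,0,0] = 0" "v 0 [0,1,1] = 0" "v 1 [0,1,1] = -1"
    "v 2 [1,0,0,0] = 1" "v 3 [1,0,0,0] = 0" "v 4 [1,0,0,0] = 0"
    "v 3 [0,0,1,1] = 1" "v 4 [0,0,1,1] = 0" "v 4 [1,1,1,0] = 1"
    using basis_H1_fa_gen_values[where 'k = 'a] by (simp_all add: v)
  have c01: "c 0 = 0" "c 1 = 0"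
    using eq[of "[1,0,0]"] eq[of "[0,1,1]"] v_values v3 by simp_all
  then have "c 2 = 0" "c 3 = 0" "c 4 = 0"
    using eq[of "[1,0,0,0]"] eq[of "[0,0,1,1]"] eq[of "[1,1,1,0]"] v_values by simp_all
  with c01 show ?thesis by (auto simp: less_Suc_eq numeral_eq_Suc)
qed

lemma mult2_iso_abelian_eq_1: "mult2_iso_abelian X \<phi> 5"
proof -
  have "(!) (basis_H1 e) ` {..<5} = set (basis_H1 e)"
    using nth_image[of 5 "basis_H1 e"] by (simp add: basis_H1_def atLeast0LessThan)
  then have "mult2_iso_abelian X \<phi> (card {..<5::nat})"
    using F3_subset_span_basis_H1 basis_H1_e_in_F3 basis_H1_e_independent_mod_N
    by (intro mult2_iso_abelianI) auto
  then show ?thesis by simp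
qed

end

theorem theorem2p11:
  fixes scale :: "'k::field \<Rightarrow> 'l::ab_group_add \<Rightarrow> 'l"
    and br :: "'l \<Rightarrow> 'l \<Rightarrow> 'l"
    and X :: "'x set"
    and \<phi> :: "('x list \<Rightarrow> 'k) \<Rightarrow> 'l"
    and m :: nat
  assumes "heisenberg scale br m"
    and "free_presentation X scale br \<phi>"
  shows "(m = 1 \<longrightarrow> mult2_iso_abelian X \<phi> 5) \<and>
         (m \<ge> 2 \<longrightarrow> mult2_iso_abelian X \<phi> ((8 * m ^ 3 - 2 * m) div 3))"
proof -
  have "lie_algebra scale br" using assms(1) by (simp add: heisenberg_def)
  then interpret heisenberg_presentation scale br X \<phi> m
    by unfold_locales (use assms in auto)
  have "mult2_iso_abelian X \<phi> 5" if "m = 1"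
  proof -
    interpret heisenberg1_presentation scale br X \<phi> m
      using that by unfold_locales
    show ?thesis by (rule mult2_iso_abelian_eq_1)
  qed
  then show ?thesis using mult2_iso_abelian_ge_2 by blast
qed

end
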